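(* Let $U$ be a model of $\mathrm{ZFCU}_R$. Then $U\models$ Collection if and only if the Łoś theorem holds for all internal ultrapowers of $U$.
   Context: $\mathrm{ZFCU}_R$ is ZFC with urelements (language $\{\in,\mathcal{A}\}$, $\mathcal{A}$ the urelement predicate), formulated with Replacement rather than Collection, with AC. Collection: for every formula $\varphi$, $\forall w,u(\forall x\in w\exists y\varphi(x,y,u)\rightarrow\exists v\forall x\in w\exists y\in v\varphi(x,y,u))$. Internal ultrapower: let $F,x\in U$ with $U\models$ "$F$ is an ultrafilter on $x$". For $f,g\in U$ that $U$ thinks are functions on $x$, put $f=_Fg$ iff $U\models\{y\in x: f(y)=g(y)\}\in F$; $[f]$ is the $=_F$-class of $f$ among such functions in $U$, and $U/F$ is the set of these classes, with $[g]\,\hat\in\,[f]$ iff $U\models\{y\in x:g(y)\in f(y)\}\in F$ and $\hat{\mathcal{A}}([f])$ iff $U\models\{y\in x:\mathcal{A}(f(y))\}\in F$. The internal ultrapower is $\langle U/F,\hat\in,\hat{\mathcal{A}}\rangle$. The Łoś theorem holds for $U/F$ if for every formula $\varphi$ and $[f_1],\dots,[f_n]\in U/F$: $U/F\models\varphi([f_1],\dots,[f_n])$ iff $U\models\{y\in x:\varphi(f_1(y),\dots,f_n(y))\}\in F$. *)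

theory Defs
  imports Main
begin

datatype fm =
    Mem nat nat
  | Eq nat nat
  | Ur nat
  | Neg fm
  | Conj fm fm
  | Exi nat fm

record 'a struc =
  univ :: "'a set"
  memb :: "'a \<Rightarrow> 'a \<Rightarrow> bool"
  urel :: "'a \<Rightarrow> bool"

fun sat :: "'a struc \<Rightarrow> fm \<Rightarrow> (nat \<Rightarrow> 'a) \<Rightarrow> bool" where
  "sat M (Mem i j) v = memb M (v i) (v j)"
| "sat M (Eq i j) v = (v i = v j)"
| "sat M (Ur i) v = urel M (v i)"
| "sat M (Neg p) v = (\<not> sat M p v)"
| "sat M (Conj p q) v = (sat M p v \<and> sat M q v)"
| "sat M (Exi n p) v = (\<exists>a\<in>univ M. sat M p (v(n := a)))"

definition is_set :: "'a struc \<Rightarrow> 'a \<Rightarrow> bool" where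
  "is_set M x \<longleftrightarrow> x \<in> univ M \<and> \<not> urel M x"

definition subset_of :: "'a struc \<Rightarrow> 'a \<Rightarrow> 'a \<Rightarrow> bool" where
  "subset_of M s x \<longleftrightarrow> is_set M s \<and> (\<forall>t\<in>univ M. memb M t s \<longrightarrow> memb M t x)"

definition is_upair :: "'a struc \<Rightarrow> 'a \<Rightarrow> 'a \<Rightarrow> 'a \<Rightarrow> bool" where
  "is_upair M z a b \<longleftrightarrow> is_set M z \<and> (\<forall>t\<in>univ M. memb M t z \<longleftrightarrow> t = a \<or> t = b)"

definition is_opair :: "'a struc \<Rightarrow> 'a \<Rightarrow> 'a \<Rightarrow> 'a \<Rightarrow> bool" where
  "is_opair M p a b \<longleftrightarrow> is_set M p \<and>
     (\<forall>z\<in>univ M. memb M z p \<longleftrightarrow> is_upair M z a a \<or> is_upair M z a b)"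

definition ZFCU_R :: "'a struc \<Rightarrow> bool" where
  "ZFCU_R M \<longleftrightarrow> (let U = univ M; E = memb M in
     U \<noteq> {}
   \<comment> \<open>urelements have no members\<close>
   \<and> (\<forall>x\<in>U. urel M x \<longrightarrow> \<not> (\<exists>y\<in>U. E y x))
   \<comment> \<open>extensionality for sets\<close>
   \<and> (\<forall>x\<in>U. \<forall>y\<in>U. is_set M x \<and> is_set M y \<and> (\<forall>z\<in>U. E z x \<longleftrightarrow> E z y) \<longrightarrow> x = y)
   \<comment> \<open>foundation\<close>
   \<and> (\<forall>x\<in>U. (\<exists>y\<in>U. E y x) \<longrightarrow> (\<exists>y\<in>U. E y x \<and> \<not> (\<exists>z\<in>U. E z x \<and> E z y)))
   \<comment> \<open>pairing\<close>
   \<and> (\<forall>a\<in>U. \<forall>b\<in>U. \<exists>y\<in>U. E a y \<and> E b y)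
   \<comment> \<open>union\<close>
   \<and> (\<forall>x\<in>U. \<exists>y\<in>U. \<forall>z\<in>U. E z x \<longrightarrow> (\<forall>t\<in>U. E t z \<longrightarrow> E t y))
   \<comment> \<open>powerset\<close>
   \<and> (\<forall>x\<in>U. \<exists>y\<in>U. \<forall>z\<in>U. subset_of M z x \<longrightarrow> E z y)
   \<comment> \<open>infinity\<close>
   \<and> (\<exists>w\<in>U. (\<exists>e\<in>U. is_set M e \<and> (\<forall>t\<in>U. \<not> E t e) \<and> E e w)
        \<and> (\<forall>z\<in>U. E z w \<longrightarrow>
             (\<exists>s\<in>U. E s w \<and> is_set M s \<and> (\<forall>t\<in>U. E t s \<longleftrightarrow> E t z \<or> t = z))))
   \<comment> \<open>separation schema\<close>
   \<and> (\<forall>\<phi> i e. (\<forall>k. e k \<in> U) \<longrightarrow> (\<forall>w\<in>U. \<exists>s\<in>U. is_set M s \<and>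
        (\<forall>z\<in>U. E z s \<longleftrightarrow> E z w \<and> sat M \<phi> (e(i := z)))))
   \<comment> \<open>replacement schema\<close>
   \<and> (\<forall>\<phi> i j e. i \<noteq> j \<longrightarrow> (\<forall>k. e k \<in> U) \<longrightarrow> (\<forall>w\<in>U.
        (\<forall>x\<in>U. E x w \<longrightarrow> (\<exists>!y. y \<in> U \<and> sat M \<phi> (e(i := x, j := y)))) \<longrightarrow>
        (\<exists>v\<in>U. \<forall>x\<in>U. E x w \<longrightarrow> (\<exists>y\<in>U. E y v \<and> sat M \<phi> (e(i := x, j := y))))))
   \<comment> \<open>choice: every set is well-orderable (by a set of Kuratowski pairs)\<close>
   \<and> (\<forall>x\<in>U. is_set M x \<longrightarrow> (\<exists>r\<in>U.
        let lt = (\<lambda>a b. \<exists>p\<in>U. E p r \<and> is_opair M p a b) in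
          (\<forall>a\<in>U. E a x \<longrightarrow> \<not> lt a a)
        \<and> (\<forall>a\<in>U. \<forall>b\<in>U. \<forall>c\<in>U. E a x \<and> E b x \<and> E c x \<and> lt a b \<and> lt b c \<longrightarrow> lt a c)
        \<and> (\<forall>a\<in>U. \<forall>b\<in>U. E a x \<and> E b x \<longrightarrow> lt a b \<or> a = b \<or> lt b a)
        \<and> (\<forall>s\<in>U. subset_of M s x \<and> (\<exists>t\<in>U. E t s) \<longrightarrow>
             (\<exists>a\<in>U. E a s \<and> (\<forall>b\<in>U. E b s \<longrightarrow> \<not> lt b a))))))"

definition Collection :: "'a struc \<Rightarrow> bool" where
  "Collection M \<longleftrightarrow> (\<forall>\<phi> i j e. i \<noteq> j \<longrightarrow> (\<forall>k. e k \<in> univ M) \<longrightarrow> (\<forall>w\<in>univ M.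
     (\<forall>x\<in>univ M. memb M x w \<longrightarrow> (\<exists>y\<in>univ M. sat M \<phi> (e(i := x, j := y)))) \<longrightarrow>
     (\<exists>v\<in>univ M. \<forall>x\<in>univ M. memb M x w \<longrightarrow>
        (\<exists>y\<in>univ M. memb M y v \<and> sat M \<phi> (e(i := x, j := y))))))"

definition is_ultrafilter :: "'a struc \<Rightarrow> 'a \<Rightarrow> 'a \<Rightarrow> bool" where
  "is_ultrafilter M F x \<longleftrightarrow> (let U = univ M; E = memb M in
     is_set M F
   \<and> (\<forall>s\<in>U. E s F \<longrightarrow> subset_of M s x)
   \<and> E x F
   \<and> (\<forall>s\<in>U. E s F \<longrightarrow> (\<exists>t\<in>U. E t s))
   \<and> (\<forall>s\<in>U. \<forall>t\<in>U. \<forall>u\<in>U. E s F \<and> E t F \<and> is_set M u \<and>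
        (\<forall>z\<in>U. E z u \<longleftrightarrow> E z s \<and> E z t) \<longrightarrow> E u F)
   \<and> (\<forall>s\<in>U. \<forall>t\<in>U. E s F \<and> subset_of M t x \<and> (\<forall>z\<in>U. E z s \<longrightarrow> E z t) \<longrightarrow> E t F)
   \<and> (\<forall>s\<in>U. subset_of M s x \<longrightarrow> E s F \<or>
        (\<forall>c\<in>U. is_set M c \<and> (\<forall>z\<in>U. E z c \<longleftrightarrow> E z x \<and> \<not> E z s) \<longrightarrow> E c F)))"

definition is_fun_on :: "'a struc \<Rightarrow> 'a \<Rightarrow> 'a \<Rightarrow> bool" where
  "is_fun_on M f x \<longleftrightarrow> is_set M f
   \<and> (\<forall>p\<in>univ M. memb M p f \<longrightarrow> (\<exists>a\<in>univ M. \<exists>b\<in>univ M. memb M a x \<and> is_opair M p a b))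
   \<and> (\<forall>a\<in>univ M. memb M a x \<longrightarrow>
        (\<exists>!b. b \<in> univ M \<and> (\<exists>p\<in>univ M. memb M p f \<and> is_opair M p a b)))"

definition app :: "'a struc \<Rightarrow> 'a \<Rightarrow> 'a \<Rightarrow> 'a" where
  "app M f a = (THE b. b \<in> univ M \<and> (\<exists>p\<in>univ M. memb M p f \<and> is_opair M p a b))"

definition in_filter :: "'a struc \<Rightarrow> 'a \<Rightarrow> 'a \<Rightarrow> ('a \<Rightarrow> bool) \<Rightarrow> bool" where
  "in_filter M F x P \<longleftrightarrow> (\<exists>s\<in>univ M. memb M s F \<and> is_set M s \<and>
     (\<forall>y\<in>univ M. memb M y s \<longleftrightarrow> memb M y x \<and> P y))"

definition cls :: "'a struc \<Rightarrow> 'a \<Rightarrow> 'a \<Rightarrow> 'a \<Rightarrow> 'a set" where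
  "cls M F x f = {g \<in> univ M. is_fun_on M g x \<and> in_filter M F x (\<lambda>y. app M f y = app M g y)}"

definition ultrapower :: "'a struc \<Rightarrow> 'a \<Rightarrow> 'a \<Rightarrow> 'a set struc" where
  "ultrapower M F x =
     \<lparr> univ = {cls M F x f | f. f \<in> univ M \<and> is_fun_on M f x},
       memb = (\<lambda>C D. \<exists>g\<in>C. \<exists>f\<in>D. in_filter M F x (\<lambda>y. memb M (app M g y) (app M f y))),
       urel = (\<lambda>C. \<exists>f\<in>C. in_filter M F x (\<lambda>y. urel M (app M f y))) \<rparr>"

definition Los :: "'a struc \<Rightarrow> 'a \<Rightarrow> 'a \<Rightarrow> bool" where
  "Los M F x \<longleftrightarrow> (\<forall>\<phi> g. (\<forall>i. g i \<in> univ M \<and> is_fun_on M (g i) x) \<longrightarrow>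
     (sat (ultrapower M F x) \<phi> (\<lambda>i. cls M F x (g i)) \<longleftrightarrow>
      in_filter M F x (\<lambda>y. sat M \<phi> (\<lambda>i. app M (g i) y))))"

end

theory Submission
  imports Defs
begin

text \<open>
  If \<open>U\<close> satisfies Collection, the existential step of Los's theorem goes through: when
  \<open>{y \<in> x. \<exists>a. \<phi>(f(y), a)} \<in> F\<close>, Collection bounds the witnesses by a set \<open>v\<close>, and choosing
  the least witness in a well-order of \<open>v\<close> gives a function \<open>h\<close> with \<open>{y \<in> x. \<phi>(f(y), h(y))} \<in> F\<close>.
  The remaining cases need only Separation, applied to formulas evaluating \<open>\<phi>\<close> at the points
  \<open>f\<^sub>0(y), f\<^sub>1(y), \<dots>\<close>.

  Conversely, let Collection fail for \<open>\<phi>\<close> on \<open>w\<close>: every \<open>a \<in> w\<close> has a \<open>\<phi>\<close>-successor, but no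
  set contains successors for all of \<open>w\<close>. The subsets of \<open>w\<close> whose successors can be collected
  form a proper ideal, and an internal Zorn argument (a recursion along a well-order of the
  filters on \<open>w\<close>) yields an ultrafilter \<open>F\<close> on \<open>w\<close> disjoint from it. By Los's theorem for
  \<open>\<exists>\<close>, the identity function has a \<open>\<phi>\<close>-successor in the ultrapower by \<open>F\<close>, represented by
  some \<open>h\<close> on a set \<open>s \<in> F\<close>; but then the range of \<open>h\<close> collects successors for \<open>s\<close>.
\<close>

definition Disj :: "fm \<Rightarrow> fm \<Rightarrow> fm" where "Disj p q = Neg (Conj (Neg p) (Neg q))"
definition Imp :: "fm \<Rightarrow> fm \<Rightarrow> fm" where "Imp p q = Neg (Conj p (Neg q))"
definition Iff :: "fm \<Rightarrow> fm \<Rightarrow> fm" where "Iff p q = Conj (Imp p q) (Imp q p)"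
definition Forall :: "nat \<Rightarrow> fm \<Rightarrow> fm" where "Forall n p = Neg (Exi n (Neg p))"

lemma sat_derived_connectives [simp]:
  "sat M (Disj p q) v \<longleftrightarrow> sat M p v \<or> sat M q v"
  "sat M (Imp p q) v \<longleftrightarrow> (sat M p v \<longrightarrow> sat M q v)"
  "sat M (Iff p q) v \<longleftrightarrow> (sat M p v \<longleftrightarrow> sat M q v)"
  "sat M (Forall n p) v \<longleftrightarrow> (\<forall>a\<in>univ M. sat M p (v(n := a)))"
  by (auto simp: Disj_def Imp_def Iff_def Forall_def)

fun var_bound :: "fm \<Rightarrow> nat" where
  "var_bound (Mem a b) = Suc (max a b)"
| "var_bound (Eq a b) = Suc (max a b)"
| "var_bound (Ur a) = Suc a"
| "var_bound (Neg p) = var_bound p"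
| "var_bound (Conj p q) = max (var_bound p) (var_bound q)"
| "var_bound (Exi n p) = max (Suc n) (var_bound p)"

lemma sat_cong_var_bound: "\<forall>k<var_bound \<phi>. v k = v' k \<Longrightarrow> sat M \<phi> v = sat M \<phi> v'"
proof (induction \<phi> arbitrary: v v')
  case (Conj p q)
  have "sat M p v = sat M p v'" by (rule Conj.IH(1)) (use Conj.prems in auto)
  moreover have "sat M q v = sat M q v'" by (rule Conj.IH(2)) (use Conj.prems in auto)
  ultimately show ?case by simp
next
  case (Exi n p)
  have "sat M p (v(n := a)) = sat M p (v'(n := a))" for a
    by (rule Exi.IH) (use Exi.prems in auto)
  then show ?case by simp
qed auto

definition fresh_var :: "fm \<Rightarrow> nat \<Rightarrow> nat \<Rightarrow> nat" where
  "fresh_var \<psi> i j = max (var_bound \<psi>) (Suc (max i j))"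

lemma fresh_var_above: "i < fresh_var \<psi> i j" "j < fresh_var \<psi> i j" "var_bound \<psi> \<le> fresh_var \<psi> i j"
  unfolding fresh_var_def by auto

definition upair_fm :: "nat \<Rightarrow> nat \<Rightarrow> nat \<Rightarrow> nat \<Rightarrow> fm" where
  "upair_fm z a b t = Conj (Neg (Ur z)) (Forall t (Iff (Mem t z) (Disj (Eq t a) (Eq t b))))"

lemma sat_upair_fm [simp]:
  "z \<noteq> t \<Longrightarrow> a \<noteq> t \<Longrightarrow> b \<noteq> t \<Longrightarrow> v z \<in> univ M \<Longrightarrow>
   sat M (upair_fm z a b t) v \<longleftrightarrow> is_upair M (v z) (v a) (v b)"
  by (simp add: upair_fm_def is_upair_def is_set_def)

definition opair_fm :: "nat \<Rightarrow> nat \<Rightarrow> nat \<Rightarrow> nat \<Rightarrow> nat \<Rightarrow> fm" where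
  "opair_fm p a b z t =
     Conj (Neg (Ur p)) (Forall z (Iff (Mem z p) (Disj (upair_fm z a a t) (upair_fm z a b t))))"

lemma sat_opair_fm [simp]:
  "p \<noteq> z \<Longrightarrow> a \<noteq> z \<Longrightarrow> b \<noteq> z \<Longrightarrow> z \<noteq> t \<Longrightarrow> a \<noteq> t \<Longrightarrow> b \<noteq> t \<Longrightarrow> v p \<in> univ M \<Longrightarrow>
   sat M (opair_fm p a b z t) v \<longleftrightarrow> is_opair M (v p) (v a) (v b)"
  by (simp add: opair_fm_def is_opair_def is_set_def)

definition subset_fm :: "nat \<Rightarrow> nat \<Rightarrow> nat \<Rightarrow> fm" where
  "subset_fm s x t = Conj (Neg (Ur s)) (Forall t (Imp (Mem t s) (Mem t x)))"

lemma sat_subset_fm [simp]: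
  "s \<noteq> t \<Longrightarrow> x \<noteq> t \<Longrightarrow> v s \<in> univ M \<Longrightarrow> sat M (subset_fm s x t) v \<longleftrightarrow> subset_of M (v s) (v x)"
  by (simp add: subset_fm_def subset_of_def is_set_def)

definition lt_fm :: "nat \<Rightarrow> nat \<Rightarrow> nat \<Rightarrow> nat \<Rightarrow> nat \<Rightarrow> nat \<Rightarrow> fm" where
  "lt_fm r a b p z t = Exi p (Conj (Mem p r) (opair_fm p a b z t))"

text \<open>\<open>least_fm \<psi> j N\<close>: the value of \<open>j\<close> is the \<open>r\<close>-least element of the set in slot \<open>N\<close>
  satisfying \<open>\<psi>\<close>, where \<open>r\<close> is in slot \<open>Suc N\<close> and \<open>N\<close> is above the variables of \<open>\<psi>\<close>.\<close>

definition least_fm :: "fm \<Rightarrow> nat \<Rightarrow> nat \<Rightarrow> fm" where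
  "least_fm \<psi> j N = Conj (Conj (Mem j N) \<psi>) (Exi (Suc (Suc N)) (Conj (Eq (Suc (Suc N)) j)
     (Forall j (Imp (Conj (Mem j N) (lt_fm (Suc N) j (Suc (Suc N)) (N + 3) (N + 4) (N + 5))) (Neg \<psi>)))))"

section \<open>Sets, pairs and functions in a model of ZFCU_R\<close>

locale zfcu_model =
  fixes M :: "'a struc"
  assumes ZFCU_R: "ZFCU_R M"
begin

abbreviation UU where "UU \<equiv> univ M"
abbreviation E where "E \<equiv> memb M"

lemmas ZFCU_R_unfolded = ZFCU_R[unfolded ZFCU_R_def Let_def]

lemma set_if_member:
  assumes "x \<in> UU" "y \<in> UU" "E y x"
  shows "is_set M x"
proof -
  have "\<forall>x\<in>UU. urel M x \<longrightarrow> \<not> (\<exists>y\<in>UU. E y x)"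
    using ZFCU_R_unfolded by (elim conjE) assumption
  then show ?thesis using assms unfolding is_set_def by blast
qed

lemma extensionality:
  assumes "is_set M x" "is_set M y" "\<And>z. z \<in> UU \<Longrightarrow> E z x \<longleftrightarrow> E z y"
  shows "x = y"
proof -
  have "\<forall>x\<in>UU. \<forall>y\<in>UU. is_set M x \<and> is_set M y \<and> (\<forall>z\<in>UU. E z x \<longleftrightarrow> E z y) \<longrightarrow> x = y"
    using ZFCU_R_unfolded by (elim conjE) assumption
  then show ?thesis using assms unfolding is_set_def by blast
qed

lemma pairing: "\<forall>a\<in>UU. \<forall>b\<in>UU. \<exists>y\<in>UU. E a y \<and> E b y"
  using ZFCU_R_unfolded by (elim conjE) assumption

lemma union: "\<forall>x\<in>UU. \<exists>y\<in>UU. \<forall>z\<in>UU. E z x \<longrightarrow> (\<forall>t\<in>UU. E t z \<longrightarrow> E t y)"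
  using ZFCU_R_unfolded by (elim conjE) assumption

lemma powerset: "\<forall>x\<in>UU. \<exists>y\<in>UU. \<forall>z\<in>UU. subset_of M z x \<longrightarrow> E z y"
  using ZFCU_R_unfolded by (elim conjE) assumption

lemma empty_set_exists: "\<exists>e\<in>UU. is_set M e \<and> (\<forall>t\<in>UU. \<not> E t e)"
proof -
  have "\<exists>w\<in>UU. (\<exists>e\<in>UU. is_set M e \<and> (\<forall>t\<in>UU. \<not> E t e) \<and> E e w)
        \<and> (\<forall>z\<in>UU. E z w \<longrightarrow>
             (\<exists>s\<in>UU. E s w \<and> is_set M s \<and> (\<forall>t\<in>UU. E t s \<longleftrightarrow> E t z \<or> t = z)))"
    using ZFCU_R_unfolded by (elim conjE) assumption
  then show ?thesis by blast
qed

lemma separation: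
  assumes "\<forall>k. e k \<in> UU" "w \<in> UU" "\<And>z. z \<in> UU \<Longrightarrow> E z w \<Longrightarrow> sat M \<phi> (e(i := z)) \<longleftrightarrow> P z"
  shows "\<exists>s\<in>UU. is_set M s \<and> (\<forall>z\<in>UU. E z s \<longleftrightarrow> E z w \<and> P z)"
proof -
  have "\<forall>\<phi> i e. (\<forall>k. e k \<in> UU) \<longrightarrow> (\<forall>w\<in>UU. \<exists>s\<in>UU. is_set M s \<and>
          (\<forall>z\<in>UU. E z s \<longleftrightarrow> E z w \<and> sat M \<phi> (e(i := z))))"
    using ZFCU_R_unfolded by (elim conjE) assumption
  then show ?thesis using assms by metis
qed

definition in_rel :: "'a \<Rightarrow> 'a \<Rightarrow> 'a \<Rightarrow> bool" where
  "in_rel r a b \<longleftrightarrow> (\<exists>p\<in>UU. E p r \<and> is_opair M p a b)"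

definition well_orders :: "'a \<Rightarrow> 'a \<Rightarrow> bool" where
  "well_orders r x \<longleftrightarrow>
     (\<forall>a\<in>UU. E a x \<longrightarrow> \<not> in_rel r a a)
   \<and> (\<forall>a\<in>UU. \<forall>b\<in>UU. \<forall>c\<in>UU. E a x \<and> E b x \<and> E c x \<and> in_rel r a b \<and> in_rel r b c \<longrightarrow> in_rel r a c)
   \<and> (\<forall>a\<in>UU. \<forall>b\<in>UU. E a x \<and> E b x \<longrightarrow> in_rel r a b \<or> a = b \<or> in_rel r b a)
   \<and> (\<forall>s\<in>UU. subset_of M s x \<and> (\<exists>t\<in>UU. E t s) \<longrightarrow>
        (\<exists>a\<in>UU. E a s \<and> (\<forall>b\<in>UU. E b s \<longrightarrow> \<not> in_rel r b a)))"

definition incl :: "'a \<Rightarrow> 'a \<Rightarrow> bool" where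
  "incl s t \<longleftrightarrow> (\<forall>z\<in>UU. E z s \<longrightarrow> E z t)"

lemma well_ordering_exists: "\<forall>x\<in>UU. is_set M x \<longrightarrow> (\<exists>r\<in>UU. well_orders r x)"
  using ZFCU_R_unfolded unfolding well_orders_def in_rel_def by (elim conjE) assumption

lemma sat_lt_fm [simp]:
  "p \<noteq> r \<Longrightarrow> p \<noteq> a \<Longrightarrow> p \<noteq> b \<Longrightarrow> p \<noteq> z \<Longrightarrow> a \<noteq> z \<Longrightarrow> b \<noteq> z \<Longrightarrow> z \<noteq> t \<Longrightarrow> a \<noteq> t \<Longrightarrow> b \<noteq> t \<Longrightarrow>
   sat M (lt_fm r a b p z t) v \<longleftrightarrow> in_rel (v r) (v a) (v b)"
  unfolding lt_fm_def in_rel_def by simp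

lemma sat_least_fm:
  assumes N: "i < N" "j < N" "var_bound \<psi> \<le> N" and "i \<noteq> j" "b \<in> UU"
  shows "sat M (least_fm \<psi> j N) (e(N := v, Suc N := r, i := y, j := b)) \<longleftrightarrow>
    E b v \<and> sat M \<psi> (e(i := y, j := b)) \<and> (\<forall>c\<in>UU. E c v \<and> in_rel r c b \<longrightarrow> \<not> sat M \<psi> (e(i := y, j := c)))"
proof -
  have "sat M \<psi> (e(N := v, Suc N := r, i := y, j := b)) = sat M \<psi> (e(i := y, j := b))"
    by (rule sat_cong_var_bound) (use N in auto)
  moreover have "sat M \<psi> (e(N := v, Suc N := r, i := y, Suc (Suc N) := b, j := c)) = sat M \<psi> (e(i := y, j := c))"
    for c by (rule sat_cong_var_bound) (use N in auto)
  ultimately show ?thesis using assms unfolding least_fm_def by simp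
qed

lemma upair_exists: assumes "a \<in> UU" "b \<in> UU" shows "\<exists>z\<in>UU. is_upair M z a b"
proof -
  obtain y where y: "y \<in> UU" "E a y" "E b y" using pairing assms by blast
  have "\<exists>s\<in>UU. is_set M s \<and> (\<forall>z\<in>UU. E z s \<longleftrightarrow> E z y \<and> (z = a \<or> z = b))"
    by (rule separation[where e="(\<lambda>_. a)(1 := a, 2 := b)" and i=0 and \<phi>="Disj (Eq 0 1) (Eq 0 2)"])
       (use assms y in auto)
  then show ?thesis using y unfolding is_upair_def by metis
qed

lemma upair_unique: "is_upair M z a b \<Longrightarrow> is_upair M z' a b \<Longrightarrow> z = z'"
  unfolding is_upair_def by (intro extensionality) auto

lemma opair_exists: assumes "a \<in> UU" "b \<in> UU" shows "\<exists>p\<in>UU. is_opair M p a b"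
proof -
  obtain z1 where z1: "z1 \<in> UU" "is_upair M z1 a a" using upair_exists assms by blast
  obtain z2 where z2: "z2 \<in> UU" "is_upair M z2 a b" using upair_exists assms by blast
  obtain p where p: "p \<in> UU" "is_upair M p z1 z2" using upair_exists z1 z2 by blast
  have "is_opair M p a b" unfolding is_opair_def
  proof (intro conjI ballI)
    show "is_set M p" using p unfolding is_upair_def by auto
    fix z assume z: "z \<in> UU"
    have "E z p \<longleftrightarrow> z = z1 \<or> z = z2" using p z unfolding is_upair_def by blast
    also have "z = z1 \<longleftrightarrow> is_upair M z a a" using z1 upair_unique by blast
    also have "z = z2 \<longleftrightarrow> is_upair M z a b" using z2 upair_unique by blast
    finally show "E z p \<longleftrightarrow> is_upair M z a a \<or> is_upair M z a b" .
  qed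
  then show ?thesis using p by blast
qed

lemma opair_inject:
  assumes "is_opair M p a b" "is_opair M p c d" "a \<in> UU" "b \<in> UU" "c \<in> UU" "d \<in> UU"
  shows "a = c \<and> b = d"
proof -
  obtain z1 where z1: "z1 \<in> UU" "is_upair M z1 a a" using upair_exists assms by blast
  obtain z2 where z2: "z2 \<in> UU" "is_upair M z2 a b" using upair_exists assms by blast
  obtain z4 where z4: "z4 \<in> UU" "is_upair M z4 c d" using upair_exists assms by blast
  have z1p: "E z1 p" and z2p: "E z2 p" and z4p: "E z4 p"
    using assms(1,2) z1 z2 z4 unfolding is_opair_def by auto
  have ac: "a = c"
  proof -
    have "is_upair M z1 c c \<or> is_upair M z1 c d" using z1p z1 assms(2) unfolding is_opair_def by auto
    then have "E c z1" using assms(5) unfolding is_upair_def by blast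
    then show ?thesis using z1 assms(5) unfolding is_upair_def by auto
  qed
  have "b = d"
  proof (cases "b = a")
    case True
    have "E d z4" using z4 assms(6) unfolding is_upair_def by blast
    moreover have "is_upair M z4 a a \<or> is_upair M z4 a b"
      using z4p z4 assms(1) unfolding is_opair_def by auto
    ultimately show ?thesis using True assms(6) unfolding is_upair_def by auto
  next
    case False
    have "E b z2" using z2 assms(4) unfolding is_upair_def by blast
    moreover have "is_upair M z2 c c \<or> is_upair M z2 c d"
      using z2p z2 assms(2) unfolding is_opair_def by auto
    ultimately have "b = c \<or> b = d" using assms(4) unfolding is_upair_def by blast
    then show ?thesis using False ac by blast
  qed
  with ac show ?thesis by blast
qed

lemma opairs_bounded:
  assumes "x \<in> UU" "v \<in> UU"
  shows "\<exists>B\<in>UU. \<forall>a\<in>UU. \<forall>b\<in>UU. \<forall>p\<in>UU. E a x \<longrightarrow> E b v \<longrightarrow> is_opair M p a b \<longrightarrow> E p B"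
proof -
  obtain y where y: "y \<in> UU" "E x y" "E v y" using pairing assms by blast
  obtain S where S: "S \<in> UU" "\<forall>z\<in>UU. E z y \<longrightarrow> (\<forall>t\<in>UU. E t z \<longrightarrow> E t S)" using union y by blast
  obtain P1 where P1: "P1 \<in> UU" "\<forall>z\<in>UU. subset_of M z S \<longrightarrow> E z P1" using powerset S by blast
  obtain P2 where P2: "P2 \<in> UU" "\<forall>z\<in>UU. subset_of M z P1 \<longrightarrow> E z P2" using powerset P1 by blast
  show ?thesis
  proof (intro bexI[OF _ P2(1)] ballI impI)
    fix a b p assume ab: "a \<in> UU" "b \<in> UU" "p \<in> UU" "E a x" "E b v" "is_opair M p a b"
    have "E a S" "E b S" using S y ab assms by blast+
    then have "E z P1" if "is_upair M z a a \<or> is_upair M z a b" "z \<in> UU" for z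
      using P1 that ab(1,2) unfolding subset_of_def is_upair_def by auto
    then have "subset_of M p P1" using ab(6) unfolding subset_of_def is_opair_def by blast
    then show "E p P2" using P2 ab by blast
  qed
qed

lemma inter_exists: "s \<in> UU \<Longrightarrow> t \<in> UU \<Longrightarrow> \<exists>u\<in>UU. is_set M u \<and> (\<forall>z\<in>UU. E z u \<longleftrightarrow> E z s \<and> E z t)"
  by (rule separation[where e="(\<lambda>_. t)" and i=0 and \<phi>="Mem 0 1"]) auto

lemma powerset_exists: "x \<in> UU \<Longrightarrow> \<exists>P\<in>UU. \<forall>z\<in>UU. E z P \<longleftrightarrow> subset_of M z x"
proof -
  assume x: "x \<in> UU"
  then obtain B where B: "B \<in> UU" "\<forall>z\<in>UU. subset_of M z x \<longrightarrow> E z B" using powerset by blast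
  have "\<exists>P\<in>UU. is_set M P \<and> (\<forall>z\<in>UU. E z P \<longleftrightarrow> E z B \<and> subset_of M z x)"
    by (rule separation[where e="\<lambda>_. x" and i=0 and \<phi>="subset_fm 0 1 2"]) (use x B in auto)
  then show ?thesis using B by blast
qed

lemma union2_bounded: "a \<in> UU \<Longrightarrow> b \<in> UU \<Longrightarrow> \<exists>V\<in>UU. \<forall>z\<in>UU. E z a \<or> E z b \<longrightarrow> E z V"
proof -
  assume ab: "a \<in> UU" "b \<in> UU"
  then obtain y where "y \<in> UU" "E a y" "E b y" using pairing by blast
  then obtain V where "V \<in> UU" "\<forall>z\<in>UU. E z y \<longrightarrow> (\<forall>t\<in>UU. E t z \<longrightarrow> E t V)" using union by blast
  then show ?thesis using ab \<open>E a y\<close> \<open>E b y\<close> by blast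
qed

lemma
  assumes "is_fun_on M f x" "a \<in> UU" "E a x"
  shows app_in_univ: "app M f a \<in> UU"
    and app_in_graph: "\<exists>p\<in>UU. E p f \<and> is_opair M p a (app M f a)"
    and in_graph_iff_app: "b \<in> UU \<Longrightarrow> (\<exists>p\<in>UU. E p f \<and> is_opair M p a b) \<longleftrightarrow> b = app M f a"
proof -
  have unique: "\<exists>!b. b \<in> UU \<and> (\<exists>p\<in>UU. E p f \<and> is_opair M p a b)"
    using assms unfolding is_fun_on_def by blast
  then have "app M f a \<in> UU \<and> (\<exists>p\<in>UU. E p f \<and> is_opair M p a (app M f a))"
    unfolding app_def by (rule theI')
  then show "app M f a \<in> UU" "\<exists>p\<in>UU. E p f \<and> is_opair M p a (app M f a)"
    and "b \<in> UU \<Longrightarrow> (\<exists>p\<in>UU. E p f \<and> is_opair M p a b) \<longleftrightarrow> b = app M f a"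
    using unique by blast+
qed

lemma fun_values_bounded:
  assumes "h \<in> UU" "is_fun_on M h x"
  shows "\<exists>V\<in>UU. \<forall>a\<in>UU. E a x \<longrightarrow> E (app M h a) V"
proof -
  obtain y where y: "y \<in> UU" "\<forall>p\<in>UU. E p h \<longrightarrow> (\<forall>z\<in>UU. E z p \<longrightarrow> E z y)"
    using union assms(1) by blast
  obtain V where V: "V \<in> UU" "\<forall>z\<in>UU. E z y \<longrightarrow> (\<forall>b\<in>UU. E b z \<longrightarrow> E b V)"
    using union y(1) by blast
  have "E (app M h a) V" if a: "a \<in> UU" "E a x" for a
  proof -
    have b: "app M h a \<in> UU" using app_in_univ[OF assms(2) a] .
    obtain p where p: "p \<in> UU" "E p h" "is_opair M p a (app M h a)"
      using app_in_graph[OF assms(2) a] by blast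
    obtain z where z: "z \<in> UU" "is_upair M z a (app M h a)" using upair_exists a b by blast
    have "E z p" "E (app M h a) z" using p(3) z b unfolding is_opair_def is_upair_def by auto
    then show ?thesis using y V p z b by blast
  qed
  then show ?thesis using V(1) by blast
qed

lemma fun_on_from_graph:
  assumes "x \<in> UU" "h \<in> UU" "is_set M h"
    and graph: "\<forall>p\<in>UU. E p h \<longleftrightarrow> (\<exists>a\<in>UU. \<exists>b\<in>UU. E a x \<and> is_opair M p a b \<and> R a b)"
    and total: "\<forall>a\<in>UU. E a x \<longrightarrow> (\<exists>b\<in>UU. R a b)"
    and single_valued: "\<forall>a\<in>UU. E a x \<longrightarrow> (\<forall>b\<in>UU. \<forall>b'\<in>UU. R a b \<longrightarrow> R a b' \<longrightarrow> b = b')"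
  shows "is_fun_on M h x" "\<forall>a\<in>UU. E a x \<longrightarrow> R a (app M h a)"
proof -
  have unique: "\<exists>!b. b \<in> UU \<and> (\<exists>p\<in>UU. E p h \<and> is_opair M p a b)" if a: "a \<in> UU" "E a x" for a
  proof -
    obtain b where b: "b \<in> UU" "R a b" using total a by blast
    obtain p where p: "p \<in> UU" "is_opair M p a b" using opair_exists a b by blast
    have "E p h" using graph p a b by meson
    moreover have "b' = b" if b': "b' \<in> UU" "p' \<in> UU" "E p' h" "is_opair M p' a b'" for b' p'
    proof -
      obtain a'' b'' where ab: "a'' \<in> UU" "b'' \<in> UU" "E a'' x" "is_opair M p' a'' b''" "R a'' b''"
        using graph b'(2,3) by blast
      then have "a'' = a" "b'' = b'" using opair_inject[OF ab(4) b'(4)] a b' by blast+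
      then show ?thesis using ab(5) single_valued a b b'(1) by blast
    qed
    ultimately show ?thesis using b p by blast
  qed
  show h_fun: "is_fun_on M h x" unfolding is_fun_on_def
  proof (intro conjI ballI impI)
    show "is_set M h" by fact
    fix p assume "p \<in> UU" "E p h"
    then show "\<exists>a\<in>UU. \<exists>b\<in>UU. E a x \<and> is_opair M p a b" using graph by blast
  next
    fix a assume "a \<in> UU" "E a x"
    then show "\<exists>!b. b \<in> UU \<and> (\<exists>p\<in>UU. E p h \<and> is_opair M p a b)" by (rule unique)
  qed
  show "\<forall>a\<in>UU. E a x \<longrightarrow> R a (app M h a)"
  proof (intro ballI impI)
    fix a assume a: "a \<in> UU" "E a x"
    obtain p where p: "p \<in> UU" "E p h" "is_opair M p a (app M h a)"
      using app_in_graph[OF h_fun a] by blast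
    obtain a'' b'' where ab: "a'' \<in> UU" "b'' \<in> UU" "E a'' x" "is_opair M p a'' b''" "R a'' b''"
      using graph p(1,2) by blast
    then have "a'' = a \<and> b'' = app M h a"
      using opair_inject[OF ab(4) p(3)] a app_in_univ[OF h_fun a] by blast
    then show "R a (app M h a)" using ab(5) by simp
  qed
qed

lemma ultrafilter_member_subset:
  assumes "is_ultrafilter M F x" "s \<in> UU" "E s F"
  shows "subset_of M s x"
proof -
  have "\<forall>s\<in>UU. E s F \<longrightarrow> subset_of M s x"
    using assms(1) unfolding is_ultrafilter_def Let_def by (elim conjE) assumption
  then show ?thesis using assms(2,3) by blast
qed

lemma ultrafilter_carrier_mem: "is_ultrafilter M F x \<Longrightarrow> E x F"
  unfolding is_ultrafilter_def Let_def by (elim conjE) assumption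

lemma definable_function:
  assumes x: "x \<in> UU" and v: "v \<in> UU" and e: "\<forall>k. e k \<in> UU" and "i \<noteq> j"
    and total: "\<forall>y\<in>UU. E y x \<longrightarrow> (\<exists>b\<in>UU. E b v \<and> sat M \<psi> (e(i := y, j := b)))"
    and single_valued: "\<forall>y\<in>UU. E y x \<longrightarrow> (\<forall>b\<in>UU. \<forall>b'\<in>UU.
          sat M \<psi> (e(i := y, j := b)) \<longrightarrow> sat M \<psi> (e(i := y, j := b')) \<longrightarrow> b = b')"
  shows "\<exists>h\<in>UU. is_fun_on M h x \<and> (\<forall>y\<in>UU. E y x \<longrightarrow> sat M \<psi> (e(i := y, j := app M h y)))"
proof -
  define N where "N = fresh_var \<psi> i j"
  have N: "i < N" "j < N" "var_bound \<psi> \<le> N" unfolding N_def using fresh_var_above by auto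
  let ?R = "\<lambda>a b. sat M \<psi> (e(i := a, j := b))"
  obtain B where B: "B \<in> UU" "\<forall>a\<in>UU. \<forall>b\<in>UU. \<forall>p\<in>UU. E a x \<longrightarrow> E b v \<longrightarrow> is_opair M p a b \<longrightarrow> E p B"
    using opairs_bounded[OF x v] by blast
  have \<psi>_local: "sat M \<psi> (e(Suc N := x, N := p, i := a, j := b)) = ?R a b" for p a b
    by (rule sat_cong_var_bound) (use N in auto)
  have "\<exists>h\<in>UU. is_set M h \<and>
      (\<forall>p\<in>UU. E p h \<longleftrightarrow> E p B \<and> (\<exists>a\<in>UU. E a x \<and> (\<exists>b\<in>UU. is_opair M p a b \<and> ?R a b)))"
  proof (rule separation[where e="e(Suc N := x)" and i=N
        and \<phi>="Exi i (Conj (Mem i (Suc N)) (Exi j (Conj (opair_fm N i j (N + 2) (N + 3)) \<psi>)))"])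
    show "\<forall>k. (e(Suc N := x)) k \<in> UU" using e x by simp
  next
    fix p assume "p \<in> UU"
    then show "sat M (Exi i (Conj (Mem i (Suc N)) (Exi j (Conj (opair_fm N i j (N + 2) (N + 3)) \<psi>))))
        ((e(Suc N := x))(N := p)) \<longleftrightarrow> (\<exists>a\<in>UU. E a x \<and> (\<exists>b\<in>UU. is_opair M p a b \<and> ?R a b))"
      using N \<open>i \<noteq> j\<close> by (simp add: \<psi>_local)
  qed (rule B(1))
  then obtain h where h: "h \<in> UU" "is_set M h"
    "\<forall>p\<in>UU. E p h \<longleftrightarrow> E p B \<and> (\<exists>a\<in>UU. E a x \<and> (\<exists>b\<in>UU. is_opair M p a b \<and> ?R a b))"
    by blast
  have "\<forall>p\<in>UU. E p h \<longleftrightarrow> (\<exists>a\<in>UU. \<exists>b\<in>UU. E a x \<and> is_opair M p a b \<and> ?R a b)"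
  proof (intro ballI iffI)
    fix p assume "p \<in> UU" "\<exists>a\<in>UU. \<exists>b\<in>UU. E a x \<and> is_opair M p a b \<and> ?R a b"
    then obtain a b where ab: "a \<in> UU" "b \<in> UU" "E a x" "is_opair M p a b" "?R a b" by blast
    then have "E b v" using total single_valued by metis
    then show "E p h" using h(3) B(2) ab \<open>p \<in> UU\<close> by blast
  qed (use h(3) in blast)
  then show ?thesis
    using fun_on_from_graph[OF x h(1,2), of ?R] total single_valued h(1) by blast
qed

lemma least_witness_exists:
  assumes v: "v \<in> UU" "well_orders r v" and e: "\<forall>k. e k \<in> UU"
    and ex: "\<exists>b\<in>UU. E b v \<and> sat M \<psi> (e(j := b))"
  shows "\<exists>b\<in>UU. E b v \<and> sat M \<psi> (e(j := b)) \<and> (\<forall>c\<in>UU. E c v \<and> in_rel r c b \<longrightarrow> \<not> sat M \<psi> (e(j := c)))"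
proof -
  have "\<exists>T\<in>UU. is_set M T \<and> (\<forall>b\<in>UU. E b T \<longleftrightarrow> E b v \<and> sat M \<psi> (e(j := b)))"
    by (rule separation[OF e v(1)]) simp
  then obtain T where T: "T \<in> UU" "is_set M T" "\<forall>b\<in>UU. E b T \<longleftrightarrow> E b v \<and> sat M \<psi> (e(j := b))"
    by blast
  have "subset_of M T v" "\<exists>b\<in>UU. E b T" using T ex unfolding subset_of_def by blast+
  then obtain b where "b \<in> UU" "E b T" "\<forall>c\<in>UU. E c T \<longrightarrow> \<not> in_rel r c b"
    using v(2) T(1) unfolding well_orders_def by blast
  then show ?thesis using T(3) by blast
qed

lemma definable_choice:
  assumes x: "x \<in> UU" and v: "v \<in> UU" and e: "\<forall>k. e k \<in> UU" and "i \<noteq> j"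
    and total: "\<forall>y\<in>UU. E y x \<longrightarrow> (\<exists>b\<in>UU. E b v \<and> sat M \<psi> (e(i := y, j := b)))"
  shows "\<exists>h\<in>UU. is_fun_on M h x \<and> (\<forall>y\<in>UU. E y x \<longrightarrow> sat M \<psi> (e(i := y, j := app M h y)))"
proof -
  let ?R = "\<lambda>a b. sat M \<psi> (e(i := a, j := b))"
  obtain v' where v': "v' \<in> UU" "is_set M v'" "\<forall>b\<in>UU. E b v' \<longleftrightarrow> E b v"
    using separation[where e="\<lambda>_. v" and i=0 and \<phi>="Eq 0 0" and P="\<lambda>_. True"] v by auto
  obtain r where r: "r \<in> UU" "well_orders r v'" using well_ordering_exists v' by blast
  define least where "least y b \<longleftrightarrow> E b v' \<and> ?R y b \<and> (\<forall>c\<in>UU. E c v' \<and> in_rel r c b \<longrightarrow> \<not> ?R y c)"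
    for y b
  define N where "N = fresh_var \<psi> i j"
  have N: "i < N" "j < N" "var_bound \<psi> \<le> N" unfolding N_def using fresh_var_above by auto
  let ?least_fm = "least_fm \<psi> j N"
  have sat_least: "sat M ?least_fm (e(N := v', Suc N := r, i := y, j := b)) \<longleftrightarrow> least y b"
    if "b \<in> UU" for y b
    using sat_least_fm[OF N \<open>i \<noteq> j\<close> that] unfolding least_def .
  have "\<exists>h\<in>UU. is_fun_on M h x \<and>
      (\<forall>y\<in>UU. E y x \<longrightarrow> sat M ?least_fm (e(N := v', Suc N := r, i := y, j := app M h y)))"
  proof (rule definable_function[OF x v'(1) _ \<open>i \<noteq> j\<close>])
    show "\<forall>k. (e(N := v', Suc N := r)) k \<in> UU" using e v' r by simp
  next
    show "\<forall>y\<in>UU. E y x \<longrightarrow> (\<exists>b\<in>UU. E b v' \<and> sat M ?least_fm (e(N := v', Suc N := r, i := y, j := b)))"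
    proof (intro ballI impI)
      fix y assume y: "y \<in> UU" "E y x"
      have "\<exists>b\<in>UU. E b v' \<and> ?R y b" using total v' y by blast
      then have "\<exists>b\<in>UU. least y b"
        using least_witness_exists[OF v'(1) r(2), of "e(i := y)"] e y unfolding least_def by simp
      then show "\<exists>b\<in>UU. E b v' \<and> sat M ?least_fm (e(N := v', Suc N := r, i := y, j := b))"
        using sat_least unfolding least_def by blast
    qed
  next
    show "\<forall>y\<in>UU. E y x \<longrightarrow> (\<forall>b\<in>UU. \<forall>b'\<in>UU. sat M ?least_fm (e(N := v', Suc N := r, i := y, j := b)) \<longrightarrow>
        sat M ?least_fm (e(N := v', Suc N := r, i := y, j := b')) \<longrightarrow> b = b')"
    proof (intro ballI impI)
      fix y b b' assume b: "b \<in> UU" "b' \<in> UU"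
        and "sat M ?least_fm (e(N := v', Suc N := r, i := y, j := b))"
          "sat M ?least_fm (e(N := v', Suc N := r, i := y, j := b'))"
      then have "least y b" "least y b'" using sat_least by blast+
      moreover have "in_rel r b b' \<or> b = b' \<or> in_rel r b' b"
        using r(2) b \<open>least y b\<close> \<open>least y b'\<close> unfolding well_orders_def least_def by blast
      ultimately show "b = b'" using b unfolding least_def by blast
    qed
  qed
  then obtain h where h: "h \<in> UU" "is_fun_on M h x"
    "\<forall>y\<in>UU. E y x \<longrightarrow> sat M ?least_fm (e(N := v', Suc N := r, i := y, j := app M h y))"
    by blast
  have "?R y (app M h y)" if "y \<in> UU" "E y x" for y
    using h(3) that sat_least[OF app_in_univ[OF h(2) that]] unfolding least_def by blast
  then show ?thesis using h(1,2) by blast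
qed

lemma constant_function:
  assumes "x \<in> UU" "u \<in> UU"
  shows "\<exists>h\<in>UU. is_fun_on M h x \<and> (\<forall>a\<in>UU. E a x \<longrightarrow> app M h a = u)"
proof -
  obtain v where v: "v \<in> UU" "E u v" using pairing assms(2) by blast
  have "\<exists>h\<in>UU. is_fun_on M h x \<and> (\<forall>a\<in>UU. E a x \<longrightarrow> sat M (Eq 1 2) ((\<lambda>_. u)(0 := a, 1 := app M h a)))"
    by (rule definable_function[OF assms(1) v(1)]) (use v assms in auto)
  then show ?thesis by simp
qed

lemma identity_function:
  assumes "x \<in> UU"
  shows "\<exists>h\<in>UU. is_fun_on M h x \<and> (\<forall>a\<in>UU. E a x \<longrightarrow> app M h a = a)"
proof -
  have "\<exists>h\<in>UU. is_fun_on M h x \<and> (\<forall>a\<in>UU. E a x \<longrightarrow> sat M (Eq 1 0) ((\<lambda>_. x)(0 := a, 1 := app M h a)))"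
    by (rule definable_function[OF assms assms]) (use assms in auto)
  then show ?thesis by simp
qed

lemma coordinate_functions:
  assumes x: "x \<in> UU" and e: "\<forall>k. e k \<in> UU"
  shows "\<exists>g. (\<forall>k. g k \<in> UU \<and> is_fun_on M (g k) x) \<and> (\<forall>y\<in>UU. E y x \<longrightarrow> (\<lambda>k. app M (g k) y) = e(i := y))"
proof -
  obtain hid where hid: "hid \<in> UU" "is_fun_on M hid x" "\<forall>a\<in>UU. E a x \<longrightarrow> app M hid a = a"
    using identity_function[OF x] by blast
  have "\<forall>k. \<exists>h. h \<in> UU \<and> is_fun_on M h x \<and> (\<forall>a\<in>UU. E a x \<longrightarrow> app M h a = e k)"
    using constant_function[OF x] e by blast
  then obtain const where const: "\<forall>k. const k \<in> UU \<and> is_fun_on M (const k) x \<and>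
      (\<forall>a\<in>UU. E a x \<longrightarrow> app M (const k) a = e k)"
    by (rule choice[THEN exE])
  have "(\<lambda>k. app M ((const(i := hid)) k) y) = e(i := y)" if "y \<in> UU" "E y x" for y
  proof (rule ext)
    fix k show "app M ((const(i := hid)) k) y = (e(i := y)) k"
      by (cases "k = i") (use hid const that in simp_all)
  qed
  moreover have "\<forall>k. (const(i := hid)) k \<in> UU \<and> is_fun_on M ((const(i := hid)) k) x" using hid const by simp
  ultimately show ?thesis by blast
qed

end

section \<open>Evaluating formulas pointwise\<close>

definition fun_var :: "nat \<Rightarrow> nat" where "fun_var k = 2 * k + 20"
definition bound_var :: "nat \<Rightarrow> nat" where "bound_var k = 2 * k + 21"

lemma var_slots_distinct [simp]:
  "fun_var i = fun_var j \<longleftrightarrow> i = j" "bound_var i = bound_var j \<longleftrightarrow> i = j"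
  "fun_var i \<noteq> bound_var j" "bound_var j \<noteq> fun_var i"
  "n < 20 \<Longrightarrow> fun_var i \<noteq> n" "n < 20 \<Longrightarrow> n \<noteq> fun_var i"
  "n < 20 \<Longrightarrow> bound_var i \<noteq> n" "n < 20 \<Longrightarrow> n \<noteq> bound_var i"
  unfolding fun_var_def bound_var_def by presburger+

text \<open>
  The formula \<open>pointwise_fm D \<phi>\<close> speaks about \<open>\<phi>(f\<^sub>0(y), f\<^sub>1(y), \<dots>)\<close>: slot 9 holds the point \<open>y\<close>,
  slot \<open>fun_var k\<close> holds the function \<open>f\<^sub>k\<close>, and the variables \<open>k \<in> D\<close>, which are bound by
  quantifiers of \<open>\<phi>\<close>, are held directly in slot \<open>bound_var k\<close>. Slots 1 to 5 are scratch.
\<close>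

definition value_fm :: "nat set \<Rightarrow> nat \<Rightarrow> nat \<Rightarrow> fm" where
  "value_fm D k T =
     (if k \<in> D then Eq T (bound_var k) else Exi 1 (Conj (Mem 1 (fun_var k)) (opair_fm 1 9 T 2 3)))"

fun pointwise_fm :: "nat set \<Rightarrow> fm \<Rightarrow> fm" where
  "pointwise_fm D (Mem i j) = Exi 4 (Exi 5 (Conj (Conj (value_fm D i 4) (value_fm D j 5)) (Mem 4 5)))"
| "pointwise_fm D (Eq i j) = Exi 4 (Exi 5 (Conj (Conj (value_fm D i 4) (value_fm D j 5)) (Eq 4 5)))"
| "pointwise_fm D (Ur i) = Exi 4 (Conj (value_fm D i 4) (Ur 4))"
| "pointwise_fm D (Neg p) = Neg (pointwise_fm D p)"
| "pointwise_fm D (Conj p q) = Conj (pointwise_fm D p) (pointwise_fm D q)"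
| "pointwise_fm D (Exi n p) = Exi (bound_var n) (pointwise_fm (insert n D) p)"

definition point_env :: "(nat \<Rightarrow> 'a) \<Rightarrow> 'a \<Rightarrow> 'a \<Rightarrow> nat \<Rightarrow> 'a" where
  "point_env g y d m = (if m = 9 then y else if 20 \<le> m \<and> even m then g ((m - 20) div 2) else d)"

lemma point_env_simps [simp]:
  "point_env g y d (fun_var k) = g k" "point_env g y d 9 = y" "point_env g y d (bound_var k) = d"
  "m < 20 \<Longrightarrow> m \<noteq> 9 \<Longrightarrow> point_env g y d m = d"
  "(point_env g y d)(9 := z) = point_env g z d"
  unfolding point_env_def fun_var_def bound_var_def by (auto intro!: ext)

context zfcu_model
begin

definition pointwise_env :: "'a \<Rightarrow> (nat \<Rightarrow> 'a) \<Rightarrow> bool" where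
  "pointwise_env x w \<longleftrightarrow> (\<forall>k. w k \<in> UU) \<and> (\<forall>k. is_fun_on M (w (fun_var k)) x) \<and> E (w 9) x"

definition point_val :: "nat set \<Rightarrow> (nat \<Rightarrow> 'a) \<Rightarrow> nat \<Rightarrow> 'a" where
  "point_val D w k = (if k \<in> D then w (bound_var k) else app M (w (fun_var k)) (w 9))"

lemma pointwise_env_upd:
  "pointwise_env x w \<Longrightarrow> a \<in> UU \<Longrightarrow> (\<And>k. m \<noteq> fun_var k) \<Longrightarrow> m \<noteq> 9 \<Longrightarrow> pointwise_env x (w(m := a))"
  unfolding pointwise_env_def by auto

lemma pointwise_env_point_env:
  "\<forall>k. g k \<in> UU \<and> is_fun_on M (g k) x \<Longrightarrow> y \<in> UU \<Longrightarrow> E y x \<Longrightarrow> d \<in> UU \<Longrightarrow>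
   pointwise_env x (point_env g y d)"
  unfolding pointwise_env_def by (auto simp: point_env_def) (auto simp: fun_var_def)

lemma point_val_in_univ: "pointwise_env x w \<Longrightarrow> point_val D w k \<in> UU"
  unfolding pointwise_env_def point_val_def by (auto intro: app_in_univ)

lemma point_val_upd:
  "(\<And>k. m \<noteq> fun_var k) \<Longrightarrow> (\<And>k. m \<noteq> bound_var k) \<Longrightarrow> m \<noteq> 9 \<Longrightarrow> point_val D (w(m := a)) = point_val D w"
  unfolding point_val_def by (rule ext) (metis fun_upd_other)

lemma sat_value_fm:
  assumes "pointwise_env x w" "T = 4 \<or> T = 5"
  shows "sat M (value_fm D i T) w \<longleftrightarrow> w T = point_val D w i"
proof (cases "i \<in> D")
  case False
  have w: "\<forall>k. w k \<in> UU" "is_fun_on M (w (fun_var i)) x" "E (w 9) x"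
    using assms(1) unfolding pointwise_env_def by auto
  have "sat M (value_fm D i T) w \<longleftrightarrow> (\<exists>p\<in>UU. E p (w (fun_var i)) \<and> is_opair M p (w 9) (w T))"
    using False assms(2) by (auto simp: value_fm_def)
  also have "\<dots> \<longleftrightarrow> w T = app M (w (fun_var i)) (w 9)"
    using in_graph_iff_app[OF w(2) _ w(3)] w(1) by blast
  finally show ?thesis using False by (simp add: point_val_def)
qed (simp add: value_fm_def point_val_def)

lemma sat_value_fm_upd:
  assumes "pointwise_env x w" "a \<in> UU" "b \<in> UU"
  shows "sat M (value_fm D i 4) (w(4 := a, 5 := b)) \<longleftrightarrow> a = point_val D w i"
    and "sat M (value_fm D i 5) (w(4 := a, 5 := b)) \<longleftrightarrow> b = point_val D w i"
    and "sat M (value_fm D i 4) (w(4 := a)) \<longleftrightarrow> a = point_val D w i"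
proof -
  have "pointwise_env x (w(4 := a, 5 := b))" "pointwise_env x (w(4 := a))"
    using assms by (simp_all add: pointwise_env_upd)
  moreover have "point_val D (w(4 := a, 5 := b)) = point_val D w" "point_val D (w(4 := a)) = point_val D w"
    by (simp_all add: point_val_upd)
  ultimately show "sat M (value_fm D i 4) (w(4 := a, 5 := b)) \<longleftrightarrow> a = point_val D w i"
    and "sat M (value_fm D i 5) (w(4 := a, 5 := b)) \<longleftrightarrow> b = point_val D w i"
    and "sat M (value_fm D i 4) (w(4 := a)) \<longleftrightarrow> a = point_val D w i"
    using sat_value_fm by auto
qed

lemma sat_pointwise_fm:
  "pointwise_env x w \<Longrightarrow> sat M (pointwise_fm D \<phi>) w \<longleftrightarrow> sat M \<phi> (point_val D w)"
proof (induction \<phi> arbitrary: D w)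
  case (Exi n p)
  have "sat M (pointwise_fm (insert n D) p) (w(bound_var n := a)) \<longleftrightarrow> sat M p ((point_val D w)(n := a))"
    if "a \<in> UU" for a
  proof -
    have env: "pointwise_env x (w(bound_var n := a))" using pointwise_env_upd[OF Exi.prems that] by simp
    have "point_val (insert n D) (w(bound_var n := a)) = (point_val D w)(n := a)"
      by (rule ext) (simp add: point_val_def)
    then show ?thesis using Exi.IH[OF env, of "insert n D"] by (simp only:)
  qed
  then show ?case by simp
qed (use point_val_in_univ sat_value_fm_upd in auto)

lemma sat_pointwise_fm_empty:
  "pointwise_env x w \<Longrightarrow> sat M (pointwise_fm {} \<phi>) w \<longleftrightarrow> sat M \<phi> (\<lambda>k. app M (w (fun_var k)) (w 9))"
  using sat_pointwise_fm[of x w "{}"] unfolding point_val_def by simp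

lemma sat_pointwise_fm_single:
  assumes "pointwise_env x w"
  shows "sat M (pointwise_fm {n} \<phi>) w \<longleftrightarrow> sat M \<phi> ((\<lambda>k. app M (w (fun_var k)) (w 9))(n := w (bound_var n)))"
proof -
  have "point_val {n} w = (\<lambda>k. app M (w (fun_var k)) (w 9))(n := w (bound_var n))"
    by (rule ext) (simp add: point_val_def)
  then show ?thesis using sat_pointwise_fm[OF assms, of "{n}"] by simp
qed

lemma sat_pointwise_fm_point_env:
  assumes "\<forall>k. g k \<in> UU \<and> is_fun_on M (g k) x" "y \<in> UU" "E y x" "a \<in> UU" "d \<in> UU"
  shows "sat M (pointwise_fm {n} \<phi>) ((point_env g y d)(bound_var n := a)) \<longleftrightarrow>
         sat M \<phi> ((\<lambda>k. app M (g k) y)(n := a))"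
proof -
  have "pointwise_env x ((point_env g y d)(bound_var n := a))"
    using pointwise_env_point_env[OF assms(1-3,5)] assms(4) by (simp add: pointwise_env_upd)
  then show ?thesis by (simp add: sat_pointwise_fm_single)
qed

end

section \<open>Los's theorem from Collection\<close>

locale internal_ultrafilter = zfcu_model +
  fixes F x
  assumes x_in_univ: "x \<in> UU" and ultrafilter: "is_ultrafilter M F x"
begin

lemma F_member_subset: "s \<in> UU \<Longrightarrow> E s F \<Longrightarrow> subset_of M s x"
  using ultrafilter_member_subset[OF ultrafilter] .

lemma x_in_F: "E x F"
  using ultrafilter_carrier_mem[OF ultrafilter] .

lemma F_member_nonempty: "s \<in> UU \<Longrightarrow> E s F \<Longrightarrow> \<exists>t\<in>UU. E t s"
  using ultrafilter unfolding is_ultrafilter_def Let_def by blast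

lemma F_inter:
  "s \<in> UU \<Longrightarrow> t \<in> UU \<Longrightarrow> u \<in> UU \<Longrightarrow> E s F \<Longrightarrow> E t F \<Longrightarrow> is_set M u \<Longrightarrow>
   \<forall>z\<in>UU. E z u \<longleftrightarrow> E z s \<and> E z t \<Longrightarrow> E u F"
  using ultrafilter unfolding is_ultrafilter_def Let_def by blast

lemma F_upward:
  "s \<in> UU \<Longrightarrow> t \<in> UU \<Longrightarrow> E s F \<Longrightarrow> subset_of M t x \<Longrightarrow> \<forall>z\<in>UU. E z s \<longrightarrow> E z t \<Longrightarrow> E t F"
  using ultrafilter unfolding is_ultrafilter_def Let_def by blast

lemma F_ultra:
  "s \<in> UU \<Longrightarrow> subset_of M s x \<Longrightarrow>
   E s F \<or> (\<forall>c\<in>UU. is_set M c \<and> (\<forall>z\<in>UU. E z c \<longleftrightarrow> E z x \<and> \<not> E z s) \<longrightarrow> E c F)"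
  using ultrafilter unfolding is_ultrafilter_def Let_def by blast

lemma x_set: "is_set M x"
  using F_member_subset[OF x_in_univ x_in_F] unfolding subset_of_def by blast

definition separable :: "('a \<Rightarrow> bool) \<Rightarrow> bool" where
  "separable P \<longleftrightarrow> (\<exists>s\<in>UU. is_set M s \<and> (\<forall>y\<in>UU. E y s \<longleftrightarrow> E y x \<and> P y))"

abbreviation large :: "('a \<Rightarrow> bool) \<Rightarrow> bool" where
  "large P \<equiv> in_filter M F x P"

lemma large_iff_mem_F:
  assumes "s \<in> UU" "is_set M s" "\<forall>y\<in>UU. E y s \<longleftrightarrow> E y x \<and> P y"
  shows "large P \<longleftrightarrow> E s F"
proof
  assume "large P"
  then obtain s' where s': "s' \<in> UU" "E s' F" "is_set M s'" "\<forall>y\<in>UU. E y s' \<longleftrightarrow> E y x \<and> P y"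
    unfolding in_filter_def by blast
  have "s' = s" using s' assms by (intro extensionality) auto
  then show "E s F" using s' by simp
qed (use assms in \<open>auto simp: in_filter_def\<close>)

lemma large_everywhere: "\<forall>y\<in>UU. E y x \<longrightarrow> P y \<Longrightarrow> large P"
  unfolding in_filter_def using x_in_univ x_in_F x_set by blast

lemma large_mono:
  assumes "large P" "separable Q" "\<forall>y\<in>UU. E y x \<longrightarrow> P y \<longrightarrow> Q y"
  shows "large Q"
proof -
  obtain s where s: "s \<in> UU" "E s F" "is_set M s" "\<forall>y\<in>UU. E y s \<longleftrightarrow> E y x \<and> P y"
    using assms(1) unfolding in_filter_def by blast
  obtain t where t: "t \<in> UU" "is_set M t" "\<forall>y\<in>UU. E y t \<longleftrightarrow> E y x \<and> Q y"
    using assms(2) unfolding separable_def by blast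
  have "E t F" using F_upward[OF s(1) t(1) s(2)] t s assms(3) unfolding subset_of_def by blast
  then show ?thesis using large_iff_mem_F[OF t] by simp
qed

lemma large_conj:
  assumes "large P" "large Q" "separable (\<lambda>y. P y \<and> Q y)"
  shows "large (\<lambda>y. P y \<and> Q y)"
proof -
  obtain s where s: "s \<in> UU" "E s F" "\<forall>y\<in>UU. E y s \<longleftrightarrow> E y x \<and> P y"
    using assms(1) unfolding in_filter_def by blast
  obtain s' where s': "s' \<in> UU" "E s' F" "\<forall>y\<in>UU. E y s' \<longleftrightarrow> E y x \<and> Q y"
    using assms(2) unfolding in_filter_def by blast
  obtain t where t: "t \<in> UU" "is_set M t" "\<forall>y\<in>UU. E y t \<longleftrightarrow> E y x \<and> P y \<and> Q y"
    using assms(3) unfolding separable_def by blast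
  have "E t F" using F_inter[OF s(1) s'(1) t(1) s(2) s'(2) t(2)] t s s' by blast
  then show ?thesis using large_iff_mem_F[OF t] by simp
qed

lemma large_not:
  assumes "separable P" "separable (\<lambda>y. \<not> P y)"
  shows "large (\<lambda>y. \<not> P y) \<longleftrightarrow> \<not> large P"
proof -
  obtain s where s: "s \<in> UU" "is_set M s" "\<forall>y\<in>UU. E y s \<longleftrightarrow> E y x \<and> P y"
    using assms(1) unfolding separable_def by blast
  obtain t where t: "t \<in> UU" "is_set M t" "\<forall>y\<in>UU. E y t \<longleftrightarrow> E y x \<and> \<not> P y"
    using assms(2) unfolding separable_def by blast
  obtain e where e: "e \<in> UU" "is_set M e" "\<forall>z\<in>UU. \<not> E z e" using empty_set_exists by blast
  have "\<not> (E s F \<and> E t F)"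
  proof
    assume "E s F \<and> E t F"
    then have "E e F" using F_inter[OF s(1) t(1) e(1)] e(2,3) s(3) t(3) by blast
    then show False using F_member_nonempty[OF e(1)] e(3) by blast
  qed
  moreover have "E s F \<or> E t F"
    using F_ultra[OF s(1)] s t x_in_univ unfolding subset_of_def by blast
  ultimately show ?thesis using large_iff_mem_F[OF s] large_iff_mem_F[OF t] by blast
qed

lemma separable_sat:
  assumes "\<forall>k. g k \<in> UU \<and> is_fun_on M (g k) x"
  shows "separable (\<lambda>y. sat M \<phi> (\<lambda>k. app M (g k) y))"
  unfolding separable_def
proof (rule separation[where e="point_env g x x" and i=9 and \<phi>="pointwise_fm {} \<phi>"])
  show "\<forall>k. point_env g x x k \<in> UU" using assms x_in_univ unfolding point_env_def by auto
next
  fix z assume "z \<in> UU" "E z x"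
  then have "pointwise_env x (point_env g z x)" using pointwise_env_point_env assms x_in_univ by blast
  then show "sat M (pointwise_fm {} \<phi>) ((point_env g x x)(9 := z)) \<longleftrightarrow> sat M \<phi> (\<lambda>k. app M (g k) z)"
    by (simp add: sat_pointwise_fm_empty)
qed (rule x_in_univ)

abbreviation is_fun :: "'a \<Rightarrow> bool" where "is_fun f \<equiv> f \<in> UU \<and> is_fun_on M f x"
abbreviation cl :: "'a \<Rightarrow> 'a set" where "cl f \<equiv> cls M F x f"
abbreviation ap :: "'a \<Rightarrow> 'a \<Rightarrow> 'a" where "ap f y \<equiv> app M f y"

lemma separable_sat_list:
  assumes "\<forall>f\<in>set fs. is_fun f" "is_fun d"
  shows "separable (\<lambda>y. sat M \<phi> (\<lambda>k. ap (if k < length fs then fs ! k else d) y))"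
  by (rule separable_sat) (use assms in auto)

lemma mem_cl: "is_fun f \<Longrightarrow> f \<in> cl f"
  unfolding cls_def by (auto intro: large_everywhere)

lemma mem_cl_iff: "g \<in> cl f \<longleftrightarrow> is_fun g \<and> large (\<lambda>y. ap f y = ap g y)"
  unfolding cls_def by auto

lemma large_eq_trans:
  assumes "is_fun f" "is_fun g" "is_fun h"
    and "large (\<lambda>y. ap f y = ap g y)" "large (\<lambda>y. ap f y = ap h y)"
  shows "large (\<lambda>y. ap g y = ap h y)"
proof -
  have "separable (\<lambda>y. ap f y = ap g y \<and> ap f y = ap h y)"
    using separable_sat_list[of "[f, g, h]" f "Conj (Eq 0 1) (Eq 0 2)"] assms by simp
  then have "large (\<lambda>y. ap f y = ap g y \<and> ap f y = ap h y)" using large_conj assms(4,5) by blast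
  moreover have "separable (\<lambda>y. ap g y = ap h y)"
    using separable_sat_list[of "[g, h]" f "Eq 0 1"] assms by simp
  ultimately show ?thesis by (rule large_mono) auto
qed

lemma cl_eq_iff:
  assumes "is_fun f" "is_fun g"
  shows "cl f = cl g \<longleftrightarrow> large (\<lambda>y. ap f y = ap g y)"
proof
  assume "cl f = cl g"
  then show "large (\<lambda>y. ap f y = ap g y)" using mem_cl[OF assms(2)] mem_cl_iff by auto
next
  assume fg: "large (\<lambda>y. ap f y = ap g y)"
  have gf: "large (\<lambda>y. ap g y = ap f y)"
    using large_eq_trans[OF assms(1,2,1) fg] large_everywhere[of "\<lambda>y. ap f y = ap f y"] by simp
  show "cl f = cl g"
  proof (intro set_eqI iffI)
    fix k assume "k \<in> cl f"
    then show "k \<in> cl g" using large_eq_trans[OF assms _ fg] unfolding mem_cl_iff by blast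
  next
    fix k assume "k \<in> cl g"
    then show "k \<in> cl f" using large_eq_trans[OF assms(2,1) _ gf] unfolding mem_cl_iff by blast
  qed
qed

lemma memb_ultrapower:
  assumes "is_fun f" "is_fun g"
  shows "memb (ultrapower M F x) (cl f) (cl g) \<longleftrightarrow> large (\<lambda>y. E (ap f y) (ap g y))"
proof
  assume "memb (ultrapower M F x) (cl f) (cl g)"
  then obtain f' g' where f': "f' \<in> cl f" and g': "g' \<in> cl g"
    and mem: "large (\<lambda>y. E (ap f' y) (ap g' y))"
    unfolding ultrapower_def by auto
  have f'f: "is_fun f'" "large (\<lambda>y. ap f y = ap f' y)" using f' mem_cl_iff by auto
  have g'g: "is_fun g'" "large (\<lambda>y. ap g y = ap g' y)" using g' mem_cl_iff by auto
  have "separable (\<lambda>y. ap g y = ap g' y \<and> E (ap f' y) (ap g' y))"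
    using separable_sat_list[of "[f, f', g, g']" f "Conj (Eq 2 3) (Mem 1 3)"] assms f'f g'g by simp
  then have "large (\<lambda>y. ap g y = ap g' y \<and> E (ap f' y) (ap g' y))"
    using large_conj g'g(2) mem by blast
  moreover have "separable (\<lambda>y. ap f y = ap f' y \<and> ap g y = ap g' y \<and> E (ap f' y) (ap g' y))"
    using separable_sat_list[of "[f, f', g, g']" f "Conj (Eq 0 1) (Conj (Eq 2 3) (Mem 1 3))"] assms f'f g'g
    by simp
  ultimately have "large (\<lambda>y. ap f y = ap f' y \<and> ap g y = ap g' y \<and> E (ap f' y) (ap g' y))"
    using large_conj f'f(2) by blast
  moreover have "separable (\<lambda>y. E (ap f y) (ap g y))"
    using separable_sat_list[of "[f, g]" f "Mem 0 1"] assms by simp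
  ultimately show "large (\<lambda>y. E (ap f y) (ap g y))" by (rule large_mono) auto
qed (use assms mem_cl in \<open>auto simp: ultrapower_def\<close>)

lemma urel_ultrapower:
  assumes "is_fun f"
  shows "urel (ultrapower M F x) (cl f) \<longleftrightarrow> large (\<lambda>y. urel M (ap f y))"
proof
  assume "urel (ultrapower M F x) (cl f)"
  then obtain f' where f': "f' \<in> cl f" and ur: "large (\<lambda>y. urel M (ap f' y))"
    unfolding ultrapower_def by auto
  have f'f: "is_fun f'" "large (\<lambda>y. ap f y = ap f' y)" using f' mem_cl_iff by auto
  have "separable (\<lambda>y. ap f y = ap f' y \<and> urel M (ap f' y))"
    using separable_sat_list[of "[f, f']" f "Conj (Eq 0 1) (Ur 1)"] assms f'f by simp
  then have "large (\<lambda>y. ap f y = ap f' y \<and> urel M (ap f' y))" using large_conj f'f(2) ur by blast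
  moreover have "separable (\<lambda>y. urel M (ap f y))"
    using separable_sat_list[of "[f]" f "Ur 0"] assms by simp
  ultimately show "large (\<lambda>y. urel M (ap f y))" by (rule large_mono) auto
qed (use assms mem_cl in \<open>auto simp: ultrapower_def\<close>)

lemma univ_ultrapower: "C \<in> univ (ultrapower M F x) \<longleftrightarrow> (\<exists>f. is_fun f \<and> C = cl f)"
  unfolding ultrapower_def by auto

lemma Collection_bound:
  assumes Coll: "Collection M" and g: "\<forall>k. is_fun (g k)" and s: "s \<in> UU"
    and witnesses: "\<forall>y\<in>UU. E y s \<longrightarrow> E y x \<and> (\<exists>a\<in>UU. sat M \<phi> ((\<lambda>k. ap (g k) y)(n := a)))"
  shows "\<exists>v\<in>UU. \<forall>y\<in>UU. E y s \<longrightarrow> (\<exists>a\<in>UU. E a v \<and> sat M \<phi> ((\<lambda>k. ap (g k) y)(n := a)))"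
proof -
  let ?\<psi> = "pointwise_fm {n} \<phi>"
  have \<psi>: "sat M ?\<psi> ((point_env g x x)(9 := y, bound_var n := a)) \<longleftrightarrow> sat M \<phi> ((\<lambda>k. ap (g k) y)(n := a))"
    if "y \<in> UU" "E y x" "a \<in> UU" for y a
    using sat_pointwise_fm_point_env g that x_in_univ by simp
  have "\<exists>v\<in>UU. \<forall>y\<in>UU. E y s \<longrightarrow> (\<exists>a\<in>UU. E a v \<and> sat M ?\<psi> ((point_env g x x)(9 := y, bound_var n := a)))"
  proof (rule Coll[unfolded Collection_def, rule_format, OF _ _ s])
    show "9 \<noteq> bound_var n" by simp
    show "point_env g x x k \<in> UU" for k using g x_in_univ unfolding point_env_def by auto
    show "\<exists>a\<in>UU. sat M ?\<psi> ((point_env g x x)(9 := y, bound_var n := a))" if "y \<in> UU" "E y s" for y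
      using witnesses \<psi> that by blast
  qed
  then obtain v where v: "v \<in> UU"
    "\<forall>y\<in>UU. E y s \<longrightarrow> (\<exists>a\<in>UU. E a v \<and> sat M ?\<psi> ((point_env g x x)(9 := y, bound_var n := a)))"
    by blast
  show ?thesis
  proof (rule bexI[OF _ v(1)], intro ballI impI)
    fix y assume y: "y \<in> UU" "E y s"
    then obtain a where "a \<in> UU" "E a v" "sat M ?\<psi> ((point_env g x x)(9 := y, bound_var n := a))"
      using v(2) by blast
    then show "\<exists>a\<in>UU. E a v \<and> sat M \<phi> ((\<lambda>k. ap (g k) y)(n := a))" using \<psi> witnesses y by blast
  qed
qed

lemma witness_function:
  assumes g: "\<forall>k. is_fun (g k)" and v: "v \<in> UU" "\<exists>a\<in>UU. E a v"
  shows "\<exists>h. is_fun h \<and> (\<forall>y\<in>UU. E y x \<longrightarrow> (\<exists>b\<in>UU. E b v \<and> sat M \<phi> ((\<lambda>k. ap (g k) y)(n := b))) \<longrightarrow>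
    sat M \<phi> ((\<lambda>k. ap (g k) y)(n := ap h y)))"
proof -
  define Q where "Q y a \<longleftrightarrow> sat M \<phi> ((\<lambda>k. ap (g k) y)(n := a))" for y a
  let ?\<psi> = "pointwise_fm {n} \<phi>"
  \<comment> \<open>every \<open>a \<in> v\<close> satisfies \<open>\<chi>\<close> at points without a witness in \<open>v\<close> (slot 11 holds \<open>v\<close>)\<close>
  let ?\<chi> = "Imp (Exi (bound_var n) (Conj (Mem (bound_var n) 11) ?\<psi>)) ?\<psi>"
  have \<chi>: "sat M ?\<chi> ((point_env g x v)(9 := y, bound_var n := a)) \<longleftrightarrow> ((\<exists>b\<in>UU. E b v \<and> Q y b) \<longrightarrow> Q y a)"
    if "y \<in> UU" "E y x" "a \<in> UU" for y a
    using sat_pointwise_fm_point_env[OF _ that(1,2) _ v(1), of g] g that(3) unfolding Q_def by simp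
  have "\<exists>h\<in>UU. is_fun_on M h x \<and> (\<forall>y\<in>UU. E y x \<longrightarrow> sat M ?\<chi> ((point_env g x v)(9 := y, bound_var n := ap h y)))"
  proof (rule definable_choice[OF x_in_univ v(1)])
    show "\<forall>k. point_env g x v k \<in> UU" using g x_in_univ v(1) unfolding point_env_def by auto
    show "9 \<noteq> bound_var n" by simp
    show "\<forall>y\<in>UU. E y x \<longrightarrow> (\<exists>b\<in>UU. E b v \<and> sat M ?\<chi> ((point_env g x v)(9 := y, bound_var n := b)))"
      using \<chi> v(2) by blast
  qed
  then show ?thesis using \<chi> app_in_univ unfolding Q_def by blast
qed

lemma Collection_witness:
  assumes Coll: "Collection M" and g: "\<forall>k. is_fun (g k)"
    and ex: "large (\<lambda>y. \<exists>a\<in>UU. sat M \<phi> ((\<lambda>k. ap (g k) y)(n := a)))"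
  shows "\<exists>h. is_fun h \<and> large (\<lambda>y. sat M \<phi> ((\<lambda>k. ap (g k) y)(n := ap h y)))"
proof -
  obtain s where s: "s \<in> UU" "E s F" "\<forall>y\<in>UU. E y s \<longleftrightarrow> E y x \<and> (\<exists>a\<in>UU. sat M \<phi> ((\<lambda>k. ap (g k) y)(n := a)))"
    using ex unfolding in_filter_def by blast
  obtain v where v: "v \<in> UU" "\<forall>y\<in>UU. E y s \<longrightarrow> (\<exists>a\<in>UU. E a v \<and> sat M \<phi> ((\<lambda>k. ap (g k) y)(n := a)))"
    using Collection_bound[OF Coll g s(1)] s(3) by blast
  have "\<exists>a\<in>UU. E a v" using F_member_nonempty[OF s(1,2)] v by blast
  then obtain h where h: "is_fun h" "\<forall>y\<in>UU. E y x \<longrightarrow> (\<exists>b\<in>UU. E b v \<and> sat M \<phi> ((\<lambda>k. ap (g k) y)(n := b))) \<longrightarrow>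
      sat M \<phi> ((\<lambda>k. ap (g k) y)(n := ap h y))"
    using witness_function[OF g v(1)] by blast
  have "(\<lambda>k. ap ((g(n := h)) k) y) = (\<lambda>k. ap (g k) y)(n := ap h y)" for y by (rule ext) simp
  then have "separable (\<lambda>y. sat M \<phi> ((\<lambda>k. ap (g k) y)(n := ap h y)))"
    using separable_sat[of "g(n := h)" \<phi>] g h(1) by simp
  then have "large (\<lambda>y. sat M \<phi> ((\<lambda>k. ap (g k) y)(n := ap h y)))"
    by (rule large_mono[OF ex]) (use s v h in blast)
  then show ?thesis using h(1) by blast
qed

lemma large_conj_iff:
  assumes "separable P" "separable Q" "separable (\<lambda>y. P y \<and> Q y)"
  shows "large (\<lambda>y. P y \<and> Q y) \<longleftrightarrow> large P \<and> large Q"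
proof
  assume PQ: "large (\<lambda>y. P y \<and> Q y)"
  show "large P \<and> large Q" using large_mono[OF PQ assms(1)] large_mono[OF PQ assms(2)] by blast
qed (use large_conj assms(3) in blast)

lemma large_exists_iff:
  assumes Coll: "Collection M" and g: "\<forall>k. is_fun (g k)"
  shows "large (\<lambda>y. \<exists>a\<in>UU. sat M \<phi> ((\<lambda>k. ap (g k) y)(n := a))) \<longleftrightarrow>
    (\<exists>h. is_fun h \<and> large (\<lambda>y. sat M \<phi> ((\<lambda>k. ap (g k) y)(n := ap h y))))"
proof
  assume "\<exists>h. is_fun h \<and> large (\<lambda>y. sat M \<phi> ((\<lambda>k. ap (g k) y)(n := ap h y)))"
  then obtain h where h: "is_fun h" "large (\<lambda>y. sat M \<phi> ((\<lambda>k. ap (g k) y)(n := ap h y)))" by blast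
  have "separable (\<lambda>y. \<exists>a\<in>UU. sat M \<phi> ((\<lambda>k. ap (g k) y)(n := a)))"
    using separable_sat[OF g, of "Exi n \<phi>"] by simp
  then show "large (\<lambda>y. \<exists>a\<in>UU. sat M \<phi> ((\<lambda>k. ap (g k) y)(n := a)))"
    by (rule large_mono[OF h(2)]) (use h(1) app_in_univ in blast)
qed (rule Collection_witness[OF Coll g])

lemma Los_if_Collection:
  assumes Coll: "Collection M"
  shows "Los M F x"
  unfolding Los_def
proof (intro allI impI)
  fix \<phi> and g :: "nat \<Rightarrow> 'a" assume "\<forall>i. g i \<in> UU \<and> is_fun_on M (g i) x"
  then show "sat (ultrapower M F x) \<phi> (\<lambda>i. cl (g i)) \<longleftrightarrow> large (\<lambda>y. sat M \<phi> (\<lambda>i. ap (g i) y))"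
  proof (induction \<phi> arbitrary: g)
    case (Mem i j) then show ?case using memb_ultrapower by simp
  next
    case (Eq i j) then show ?case using cl_eq_iff by simp
  next
    case (Ur i) then show ?case using urel_ultrapower by simp
  next
    case (Neg p)
    then show ?case
      using large_not separable_sat[OF Neg.prems, of p] separable_sat[OF Neg.prems, of "Neg p"] by simp
  next
    case (Conj p q)
    then show ?case using large_conj_iff separable_sat[OF Conj.prems, of p]
        separable_sat[OF Conj.prems, of q] separable_sat[OF Conj.prems, of "Conj p q"] by simp
  next
    case (Exi n p)
    have step: "sat (ultrapower M F x) p ((\<lambda>i. cl (g i))(n := cl h)) \<longleftrightarrow>
        large (\<lambda>y. sat M p ((\<lambda>i. ap (g i) y)(n := ap h y)))" if "is_fun h" for h
    proof -
      have "\<forall>i. is_fun ((g(n := h)) i)" using Exi.prems that by simp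
      moreover have "(\<lambda>i. cl (g i))(n := cl h) = (\<lambda>i. cl ((g(n := h)) i))"
        "(\<lambda>i. ap ((g(n := h)) i) y) = (\<lambda>i. ap (g i) y)(n := ap h y)" for y
        by (rule ext, simp)+
      ultimately show ?thesis using Exi.IH by simp
    qed
    have "sat (ultrapower M F x) (Exi n p) (\<lambda>i. cl (g i)) \<longleftrightarrow>
        (\<exists>h. is_fun h \<and> sat (ultrapower M F x) p ((\<lambda>i. cl (g i))(n := cl h)))"
      using univ_ultrapower by auto
    also have "\<dots> \<longleftrightarrow> (\<exists>h. is_fun h \<and> large (\<lambda>y. sat M p ((\<lambda>i. ap (g i) y)(n := ap h y))))"
      using step by blast
    finally show ?case using large_exists_iff[OF Coll Exi.prems] by simp
  qed
qed

end

section \<open>Transfinite recursion\<close>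

text \<open>
  The recursion \<open>H \<in> X \<longleftrightarrow> (\<forall>K \<in> X. K <\<^sub>r H \<longrightarrow> K \<subseteq> H)\<close> along a well-order \<open>r\<close> of a set
  \<open>P\<close> is solved through approximations, i.e. solutions on initial segments \<open>{H \<in> P. H \<le>\<^sub>r G}\<close>.
  The set \<open>PP\<close> contains all subsets of \<open>P\<close>, so that approximations can be quantified over
  inside the model; in the formulas below, slots 3, 4, 5 hold \<open>P\<close>, \<open>r\<close> and \<open>PP\<close>.
\<close>

definition incl_fm :: "nat \<Rightarrow> nat \<Rightarrow> nat \<Rightarrow> fm" where
  "incl_fm s t z = Forall z (Imp (Mem z s) (Mem z t))"

definition below_eq_fm :: "nat \<Rightarrow> nat \<Rightarrow> fm" where
  "below_eq_fm H G = Disj (Eq H G) (lt_fm 4 H G 0 1 2)"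

definition approx_fm :: "nat \<Rightarrow> nat \<Rightarrow> fm" where
  "approx_fm Y G = Conj (subset_fm Y 3 23) (Conj (Forall 20 (Imp (Mem 20 Y) (below_eq_fm 20 G)))
     (Forall 20 (Imp (Conj (Mem 20 3) (below_eq_fm 20 G))
        (Iff (Mem 20 Y) (Forall 21 (Imp (Conj (Mem 21 Y) (lt_fm 4 21 20 0 1 2)) (incl_fm 21 20 22)))))))"

definition approximated_fm :: "nat \<Rightarrow> fm" where
  "approximated_fm K = Exi 7 (Conj (Mem 7 5) (Conj (approx_fm 7 K) (Mem K 7)))"

locale greedy_recursion = zfcu_model +
  fixes P r PP
  assumes P_in_univ: "P \<in> UU" and r_in_univ: "r \<in> UU" and PP_in_univ: "PP \<in> UU"
    and PP_powerset: "\<forall>Y\<in>UU. subset_of M Y P \<longrightarrow> E Y PP"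
    and r_well_orders: "well_orders r P"
begin

lemma r_irrefl: "a \<in> UU \<Longrightarrow> E a P \<Longrightarrow> \<not> in_rel r a a"
  using r_well_orders unfolding well_orders_def by blast

lemma r_trans:
  "a \<in> UU \<Longrightarrow> b \<in> UU \<Longrightarrow> c \<in> UU \<Longrightarrow> E a P \<Longrightarrow> E b P \<Longrightarrow> E c P \<Longrightarrow>
   in_rel r a b \<Longrightarrow> in_rel r b c \<Longrightarrow> in_rel r a c"
  using r_well_orders unfolding well_orders_def by blast

lemma r_minimal:
  "s \<in> UU \<Longrightarrow> subset_of M s P \<Longrightarrow> \<exists>t\<in>UU. E t s \<Longrightarrow> \<exists>a\<in>UU. E a s \<and> (\<forall>b\<in>UU. E b s \<longrightarrow> \<not> in_rel r b a)"
  using r_well_orders unfolding well_orders_def by blast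

definition below_eq :: "'a \<Rightarrow> 'a \<Rightarrow> bool" where
  "below_eq H G \<longleftrightarrow> H = G \<or> in_rel r H G"

definition approx :: "'a \<Rightarrow> 'a \<Rightarrow> bool" where
  "approx Y G \<longleftrightarrow> subset_of M Y P \<and> (\<forall>H\<in>UU. E H Y \<longrightarrow> below_eq H G) \<and>
     (\<forall>H\<in>UU. E H P \<and> below_eq H G \<longrightarrow> (E H Y \<longleftrightarrow> (\<forall>K\<in>UU. E K Y \<and> in_rel r K H \<longrightarrow> incl K H)))"

definition approximated :: "'a \<Rightarrow> bool" where
  "approximated H \<longleftrightarrow> (\<exists>Y\<in>UU. E Y PP \<and> approx Y H \<and> E H Y)"

lemma sat_incl_fm [simp]: "s \<noteq> z \<Longrightarrow> t \<noteq> z \<Longrightarrow> sat M (incl_fm s t z) v \<longleftrightarrow> incl (v s) (v t)"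
  unfolding incl_fm_def incl_def by simp

lemma sat_below_eq_fm [simp]:
  "H \<notin> {0, 1, 2} \<Longrightarrow> G \<notin> {0, 1, 2} \<Longrightarrow> v 4 = r \<Longrightarrow> sat M (below_eq_fm H G) v \<longleftrightarrow> below_eq (v H) (v G)"
  unfolding below_eq_fm_def below_eq_def by simp

lemma sat_approx_fm [simp]:
  assumes "v 3 = P" "v 4 = r" "v Y \<in> UU" "Y \<notin> {0, 1, 2, 3, 4, 20, 21, 22, 23}" "G \<notin> {0, 1, 2, 3, 4, 20, 21, 22, 23}"
  shows "sat M (approx_fm Y G) v \<longleftrightarrow> approx (v Y) (v G)"
  using assms unfolding approx_fm_def approx_def by simp

lemma sat_approximated_fm [simp]:
  assumes "v 3 = P" "v 4 = r" "v 5 = PP" "K \<notin> {0, 1, 2, 3, 4, 5, 7, 20, 21, 22, 23}"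
  shows "sat M (approximated_fm K) v \<longleftrightarrow> approximated (v K)"
  using assms unfolding approximated_fm_def approximated_def by simp

lemma below_eq_trans:
  "a \<in> UU \<Longrightarrow> b \<in> UU \<Longrightarrow> c \<in> UU \<Longrightarrow> E a P \<Longrightarrow> E b P \<Longrightarrow> E c P \<Longrightarrow>
   below_eq a b \<Longrightarrow> below_eq b c \<Longrightarrow> below_eq a c"
  unfolding below_eq_def using r_trans by blast

lemma less_below_eq_trans:
  "a \<in> UU \<Longrightarrow> b \<in> UU \<Longrightarrow> c \<in> UU \<Longrightarrow> E a P \<Longrightarrow> E b P \<Longrightarrow> E c P \<Longrightarrow>
   in_rel r a b \<Longrightarrow> below_eq b c \<Longrightarrow> in_rel r a c"
  unfolding below_eq_def using r_trans by blast

lemma approx_subset: "approx Y G \<Longrightarrow> K \<in> UU \<Longrightarrow> E K Y \<Longrightarrow> E K P"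
  unfolding approx_def subset_of_def by blast

lemma approx_coherent:
  assumes Y: "approx Y G" "Y \<in> UU" and Y': "approx Y' G'" "Y' \<in> UU"
    and G: "G \<in> UU" "G' \<in> UU" "E G P" "E G' P" "below_eq G G'"
    and H: "H \<in> UU" "E H P" "below_eq H G"
  shows "E H Y \<longleftrightarrow> E H Y'"
proof (rule ccontr)
  assume disagree: "\<not> (E H Y \<longleftrightarrow> E H Y')"
  have "\<exists>D\<in>UU. is_set M D \<and> (\<forall>z\<in>UU. E z D \<longleftrightarrow> E z P \<and> below_eq z G \<and> \<not> (E z Y \<longleftrightarrow> E z Y'))"
    by (rule separation[where e="(\<lambda>_. P)(4 := r, 8 := G, 9 := Y, 10 := Y')" and i=6
          and \<phi>="Conj (below_eq_fm 6 8) (Neg (Iff (Mem 6 9) (Mem 6 10)))"])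
       (use P_in_univ r_in_univ G Y Y' in auto)
  then obtain D where D: "D \<in> UU" "is_set M D"
    "\<forall>z\<in>UU. E z D \<longleftrightarrow> E z P \<and> below_eq z G \<and> \<not> (E z Y \<longleftrightarrow> E z Y')"
    by blast
  have "subset_of M D P" "\<exists>t\<in>UU. E t D" using D disagree H unfolding subset_of_def by blast+
  then obtain H0 where H0: "H0 \<in> UU" "E H0 D" "\<forall>b\<in>UU. E b D \<longrightarrow> \<not> in_rel r b H0"
    using r_minimal D(1) by blast
  have H0P: "E H0 P" "below_eq H0 G" "\<not> (E H0 Y \<longleftrightarrow> E H0 Y')" using D H0 by auto
  have "below_eq H0 G'" using below_eq_trans[OF H0(1) G(1,2) H0P(1) G(3,4) H0P(2) G(5)] .
  then have "E H0 Y' \<longleftrightarrow> (\<forall>K\<in>UU. E K Y' \<and> in_rel r K H0 \<longrightarrow> incl K H0)"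
    using Y'(1) H0 H0P unfolding approx_def by blast
  moreover have "E H0 Y \<longleftrightarrow> (\<forall>K\<in>UU. E K Y \<and> in_rel r K H0 \<longrightarrow> incl K H0)"
    using Y(1) H0 H0P unfolding approx_def by blast
  moreover have "E K Y \<longleftrightarrow> E K Y'" if K: "K \<in> UU" "in_rel r K H0" "E K P" for K
  proof -
    have "below_eq K G"
      using less_below_eq_trans[OF K(1) H0(1) G(1) K(3) H0P(1) G(3) K(2) H0P(2)] unfolding below_eq_def by blast
    then show ?thesis using H0(3) D(3) K by blast
  qed
  ultimately have "E H0 Y \<longleftrightarrow> E H0 Y'"
    using approx_subset[OF Y(1)] approx_subset[OF Y'(1)] by blast
  then show False using H0P(3) by blast
qed

lemma approximated_iff:
  assumes "K \<in> UU" "E K P" "approx Y K" "Y \<in> UU"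
  shows "approximated K \<longleftrightarrow> E K Y"
proof
  assume "approximated K"
  then obtain Y' where "Y' \<in> UU" "approx Y' K" "E K Y'" unfolding approximated_def by blast
  then show "E K Y"
    using approx_coherent[OF assms(3,4) \<open>approx Y' K\<close> \<open>Y' \<in> UU\<close> assms(1,1,2,2) _ assms(1,2)]
    unfolding below_eq_def by blast
next
  assume "E K Y"
  then show "approximated K" unfolding approximated_def using assms PP_powerset unfolding approx_def by blast
qed

lemma approx_step:
  assumes G0: "G0 \<in> UU" "E G0 P"
    and below: "\<And>H. H \<in> UU \<Longrightarrow> E H P \<Longrightarrow> in_rel r H G0 \<Longrightarrow> \<exists>Y\<in>UU. approx Y H"
  shows "\<exists>Y\<in>UU. approx Y G0"
proof -
  have "\<exists>Y0\<in>UU. is_set M Y0 \<and> (\<forall>z\<in>UU. E z Y0 \<longleftrightarrow> E z P \<and> ((in_rel r z G0 \<and> approximated z) \<or>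
       (z = G0 \<and> (\<forall>K\<in>UU. E K P \<and> in_rel r K G0 \<and> approximated K \<longrightarrow> incl K G0))))"
    by (rule separation[where e="(\<lambda>_. P)(4 := r, 5 := PP, 8 := G0)" and i=6
          and \<phi>="Disj (Conj (lt_fm 4 6 8 0 1 2) (approximated_fm 6))
                 (Conj (Eq 6 8) (Forall 9 (Imp (Conj (Mem 9 3) (Conj (lt_fm 4 9 8 0 1 2) (approximated_fm 9)))
                    (incl_fm 9 8 22))))"])
       (use P_in_univ r_in_univ PP_in_univ G0 in auto)
  then obtain Y0 where Y0: "Y0 \<in> UU" "is_set M Y0"
    "\<forall>z\<in>UU. E z Y0 \<longleftrightarrow> E z P \<and> ((in_rel r z G0 \<and> approximated z) \<or>
       (z = G0 \<and> (\<forall>K\<in>UU. E K P \<and> in_rel r K G0 \<and> approximated K \<longrightarrow> incl K G0)))"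
    by blast
  have below_G0: "E K Y0 \<longleftrightarrow> approximated K" if "K \<in> UU" "E K P" "in_rel r K G0" for K
    using Y0(3) that r_irrefl by blast
  have "approx Y0 G0" unfolding approx_def
  proof (intro conjI ballI impI)
    show "subset_of M Y0 P" using Y0 unfolding subset_of_def by blast
    fix H assume "H \<in> UU" "E H Y0" then show "below_eq H G0" using Y0 unfolding below_eq_def by blast
  next
    fix H assume H: "H \<in> UU" "E H P \<and> below_eq H G0"
    show "E H Y0 \<longleftrightarrow> (\<forall>K\<in>UU. E K Y0 \<and> in_rel r K H \<longrightarrow> incl K H)"
    proof (cases "H = G0")
      case True
      then show ?thesis using Y0(3) H below_G0 r_irrefl by blast
    next
      case False
      then have HG: "in_rel r H G0" using H unfolding below_eq_def by blast
      obtain YH where YH: "YH \<in> UU" "approx YH H" using below H HG by blast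
      have "E K YH \<longleftrightarrow> E K Y0" if K: "K \<in> UU" "in_rel r K H" "E K P" for K
      proof -
        have KG: "in_rel r K G0"
          using less_below_eq_trans[OF K(1) H(1) G0(1) K(3) _ G0(2) K(2)] H HG unfolding below_eq_def by blast
        obtain YK where YK: "YK \<in> UU" "approx YK K" using below K(1,3) KG by blast
        have "E K YK \<longleftrightarrow> E K YH"
          using approx_coherent[OF YK(2,1) YH(2,1) K(1) H(1) K(3)] H K unfolding below_eq_def by blast
        then show ?thesis using approximated_iff[OF K(1,3) YK(2,1)] below_G0[OF K(1,3) KG] by blast
      qed
      then have "(\<forall>K\<in>UU. E K YH \<and> in_rel r K H \<longrightarrow> incl K H) \<longleftrightarrow> (\<forall>K\<in>UU. E K Y0 \<and> in_rel r K H \<longrightarrow> incl K H)"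
        using approx_subset[OF YH(2)] Y0(3) by blast
      moreover have "E H YH \<longleftrightarrow> (\<forall>K\<in>UU. E K YH \<and> in_rel r K H \<longrightarrow> incl K H)"
        using YH(2) H unfolding approx_def below_eq_def by blast
      ultimately show ?thesis using below_G0 H HG approximated_iff[OF H(1) _ YH(2,1)] by blast
    qed
  qed
  then show ?thesis using Y0(1) by blast
qed

lemma approx_exists: "G \<in> UU \<Longrightarrow> E G P \<Longrightarrow> \<exists>Y\<in>UU. approx Y G"
proof (rule ccontr)
  assume G: "G \<in> UU" "E G P" and none: "\<not> (\<exists>Y\<in>UU. approx Y G)"
  have "\<exists>B\<in>UU. is_set M B \<and> (\<forall>z\<in>UU. E z B \<longleftrightarrow> E z P \<and> \<not> (\<exists>Y\<in>UU. E Y PP \<and> approx Y z))"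
    by (rule separation[where e="(\<lambda>_. P)(4 := r, 5 := PP)" and i=6
          and \<phi>="Neg (Exi 7 (Conj (Mem 7 5) (approx_fm 7 6)))"])
       (use P_in_univ r_in_univ PP_in_univ in auto)
  then obtain B where B: "B \<in> UU" "is_set M B"
    "\<forall>z\<in>UU. E z B \<longleftrightarrow> E z P \<and> \<not> (\<exists>Y\<in>UU. E Y PP \<and> approx Y z)"
    by blast
  have approx_PP: "approx Y z \<Longrightarrow> Y \<in> UU \<Longrightarrow> E Y PP" for Y z
    using PP_powerset unfolding approx_def by blast
  have "subset_of M B P" "\<exists>t\<in>UU. E t B" using B G none approx_PP unfolding subset_of_def by blast+
  then obtain G0 where G0: "G0 \<in> UU" "E G0 B" "\<forall>b\<in>UU. E b B \<longrightarrow> \<not> in_rel r b G0"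
    using r_minimal B(1) by blast
  have "\<exists>Y\<in>UU. approx Y G0"
    by (rule approx_step) (use G0 B approx_PP in blast)+
  then show False using G0 B approx_PP by blast
qed

lemma greedy_set_exists:
  "\<exists>X\<in>UU. is_set M X \<and> (\<forall>H\<in>UU. E H X \<longrightarrow> E H P) \<and>
     (\<forall>H\<in>UU. E H P \<longrightarrow> (E H X \<longleftrightarrow> (\<forall>K\<in>UU. E K X \<and> in_rel r K H \<longrightarrow> incl K H)))"
proof -
  have "\<exists>X\<in>UU. is_set M X \<and> (\<forall>z\<in>UU. E z X \<longleftrightarrow> E z P \<and> approximated z)"
    by (rule separation[where e="(\<lambda>_. P)(4 := r, 5 := PP)" and i=6 and \<phi>="approximated_fm 6"])
       (use P_in_univ r_in_univ PP_in_univ in auto)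
  then obtain X where X: "X \<in> UU" "is_set M X" "\<forall>z\<in>UU. E z X \<longleftrightarrow> E z P \<and> approximated z" by blast
  have "E H X \<longleftrightarrow> (\<forall>K\<in>UU. E K X \<and> in_rel r K H \<longrightarrow> incl K H)" if H: "H \<in> UU" "E H P" for H
  proof -
    obtain YH where YH: "YH \<in> UU" "approx YH H" using approx_exists H by blast
    have "E K YH \<longleftrightarrow> E K X" if K: "K \<in> UU" "in_rel r K H" "E K P" for K
    proof -
      obtain YK where YK: "YK \<in> UU" "approx YK K" using approx_exists K by blast
      have "E K YK \<longleftrightarrow> E K YH"
        using approx_coherent[OF YK(2,1) YH(2,1) K(1) H(1) K(3) H(2)] K unfolding below_eq_def by blast
      then show ?thesis using approximated_iff[OF K(1,3) YK(2,1)] X(3) K by blast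
    qed
    then have "(\<forall>K\<in>UU. E K YH \<and> in_rel r K H \<longrightarrow> incl K H) \<longleftrightarrow> (\<forall>K\<in>UU. E K X \<and> in_rel r K H \<longrightarrow> incl K H)"
      using approx_subset[OF YH(2)] X(3) by blast
    moreover have "E H YH \<longleftrightarrow> (\<forall>K\<in>UU. E K YH \<and> in_rel r K H \<longrightarrow> incl K H)"
      using YH(2) H unfolding approx_def below_eq_def by blast
    ultimately show ?thesis using X(3) approximated_iff[OF H YH(2,1)] H by blast
  qed
  then show ?thesis using X by blast
qed

end

lemma (in zfcu_model) greedy_set_exists:
  assumes "P \<in> UU" "r \<in> UU" "well_orders r P"
  shows "\<exists>X\<in>UU. is_set M X \<and> (\<forall>H\<in>UU. E H X \<longrightarrow> E H P) \<and>
     (\<forall>H\<in>UU. E H P \<longrightarrow> (E H X \<longleftrightarrow> (\<forall>K\<in>UU. E K X \<and> in_rel r K H \<longrightarrow> incl K H)))"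
proof -
  obtain PP where "PP \<in> UU" "\<forall>Y\<in>UU. subset_of M Y P \<longrightarrow> E Y PP" using powerset assms(1) by blast
  then interpret greedy_recursion M P r PP using assms by unfold_locales
  show ?thesis by (rule greedy_set_exists)
qed

section \<open>Ultrafilters avoiding an ideal\<close>

definition filter_avoiding_fm :: fm where
  "filter_avoiding_fm = Conj (Neg (Ur 6)) (Conj (Forall 7 (Imp (Mem 7 6) (subset_fm 7 3 10))) (Conj (Mem 3 6)
    (Conj (Forall 7 (Forall 8 (Forall 9 (Imp (Conj (Mem 7 6) (Conj (Mem 8 6) (Conj (Neg (Ur 9))
         (Forall 10 (Iff (Mem 10 9) (Conj (Mem 10 7) (Mem 10 8))))))) (Mem 9 6)))))
     (Conj (Forall 7 (Forall 8 (Imp (Conj (Mem 7 6) (Conj (subset_fm 8 3 10) (Forall 10 (Imp (Mem 10 7) (Mem 10 8)))))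
         (Mem 8 6))))
      (Forall 7 (Imp (Mem 7 6) (Neg (Mem 7 4))))))))"

context zfcu_model
begin

definition is_ideal :: "'a \<Rightarrow> 'a \<Rightarrow> bool" where
  "is_ideal I w \<longleftrightarrow> (\<exists>s\<in>UU. E s I) \<and> \<not> E w I \<and>
     (\<forall>s\<in>UU. \<forall>t\<in>UU. \<forall>u\<in>UU. E s I \<and> E t I \<and> subset_of M u w \<and> (\<forall>z\<in>UU. E z u \<longrightarrow> E z s \<or> E z t)
        \<longrightarrow> E u I)"

lemma is_idealD:
  assumes "is_ideal I w"
  shows ideal_nonempty: "\<exists>s\<in>UU. E s I"
    and ideal_proper: "\<not> E w I"
    and ideal_union: "\<forall>s\<in>UU. \<forall>t\<in>UU. \<forall>u\<in>UU. E s I \<and> E t I \<and> subset_of M u w \<and>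
          (\<forall>z\<in>UU. E z u \<longrightarrow> E z s \<or> E z t) \<longrightarrow> E u I"
  using assms unfolding is_ideal_def by blast+

definition filter_avoiding :: "'a \<Rightarrow> 'a \<Rightarrow> 'a \<Rightarrow> bool" where
  "filter_avoiding w I G \<longleftrightarrow> is_set M G \<and> (\<forall>s\<in>UU. E s G \<longrightarrow> subset_of M s w) \<and> E w G \<and>
     (\<forall>s\<in>UU. \<forall>t\<in>UU. \<forall>u\<in>UU. E s G \<and> E t G \<and> is_set M u \<and> (\<forall>z\<in>UU. E z u \<longleftrightarrow> E z s \<and> E z t) \<longrightarrow> E u G) \<and>
     (\<forall>s\<in>UU. \<forall>t\<in>UU. E s G \<and> subset_of M t w \<and> incl s t \<longrightarrow> E t G) \<and>
     (\<forall>s\<in>UU. E s G \<longrightarrow> \<not> E s I)"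

lemma filter_avoidingD:
  assumes "filter_avoiding w I G"
  shows filter_avoiding_subset: "\<forall>s\<in>UU. E s G \<longrightarrow> subset_of M s w"
    and filter_avoiding_inter:
      "\<forall>s\<in>UU. \<forall>t\<in>UU. \<forall>u\<in>UU. E s G \<and> E t G \<and> is_set M u \<and> (\<forall>z\<in>UU. E z u \<longleftrightarrow> E z s \<and> E z t) \<longrightarrow> E u G"
    and filter_avoiding_upward: "\<forall>s\<in>UU. \<forall>t\<in>UU. E s G \<and> subset_of M t w \<and> incl s t \<longrightarrow> E t G"
    and filter_avoiding_avoids: "\<forall>s\<in>UU. E s G \<longrightarrow> \<not> E s I"
  using assms unfolding filter_avoiding_def by blast+

lemma singleton_filter_avoiding:
  assumes w: "w \<in> UU" and w_set: "is_set M w" and proper: "\<not> E w I" and G: "is_upair M G w w"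
  shows "filter_avoiding w I G"
proof -
  have G_iff: "\<forall>z\<in>UU. E z G \<longleftrightarrow> z = w" using G unfolding is_upair_def by blast
  show ?thesis unfolding filter_avoiding_def
  proof (intro conjI ballI impI)
    show "is_set M G" using G unfolding is_upair_def by blast
    show "E w G" using G_iff w by blast
    fix s assume "s \<in> UU" "E s G"
    then have "s = w" using G_iff by blast
    then show "subset_of M s w" "\<not> E s I" using w_set proper unfolding subset_of_def by blast+
  next
    fix s t u assume stu: "s \<in> UU" "t \<in> UU" "u \<in> UU"
      "E s G \<and> E t G \<and> is_set M u \<and> (\<forall>z\<in>UU. E z u \<longleftrightarrow> E z s \<and> E z t)"
    then have "s = w" "t = w" using G_iff by blast+
    then have "u = w" using stu w_set by (intro extensionality) auto
    then show "E u G" using G_iff w by blast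
  next
    fix s t assume st: "s \<in> UU" "t \<in> UU" "E s G \<and> subset_of M t w \<and> incl s t"
    then have "s = w" using G_iff by blast
    then have "t = w" using st w_set unfolding subset_of_def incl_def by (intro extensionality) auto
    then show "E t G" using G_iff w by blast
  qed
qed

lemma sat_filter_avoiding_fm:
  "v 3 = w \<Longrightarrow> v 4 = I \<Longrightarrow> v 6 \<in> UU \<Longrightarrow> sat M filter_avoiding_fm v \<longleftrightarrow> filter_avoiding w I (v 6)"
  unfolding filter_avoiding_fm_def filter_avoiding_def incl_def by (simp add: is_set_def)

end

text \<open>
  The internal Zorn argument: \<open>P\<close> is the set of filters on \<open>w\<close> disjoint from the ideal \<open>I\<close>,
  well-ordered by \<open>r\<close>, \<open>X\<close> solves the recursion of the previous section, and its union \<open>Fu\<close>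
  is a maximal filter disjoint from \<open>I\<close>.
\<close>

locale filter_chain = zfcu_model +
  fixes w I Pw PPw P r X Fu
  assumes w_in_univ: "w \<in> UU" and w_set: "is_set M w"
    and ideal: "is_ideal I w"
    and Pw_in_univ: "Pw \<in> UU" and Pw_iff: "\<forall>z\<in>UU. E z Pw \<longleftrightarrow> subset_of M z w"
    and PPw_powerset: "\<forall>z\<in>UU. subset_of M z Pw \<longrightarrow> E z PPw"
    and P_in_univ: "P \<in> UU" and P_iff: "\<forall>G\<in>UU. E G P \<longleftrightarrow> E G PPw \<and> filter_avoiding w I G"
    and r_well_orders: "well_orders r P"
    and X_subset: "\<forall>H\<in>UU. E H X \<longrightarrow> E H P"
    and X_iff: "\<forall>H\<in>UU. E H P \<longrightarrow> (E H X \<longleftrightarrow> (\<forall>K\<in>UU. E K X \<and> in_rel r K H \<longrightarrow> incl K H))"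
    and Fu_in_univ: "Fu \<in> UU" and Fu_set: "is_set M Fu"
    and Fu_iff: "\<forall>s\<in>UU. E s Fu \<longleftrightarrow> subset_of M s w \<and> (\<exists>G\<in>UU. E G X \<and> E s G)"
begin

lemma X_chain: "G1 \<in> UU \<Longrightarrow> G2 \<in> UU \<Longrightarrow> E G1 X \<Longrightarrow> E G2 X \<Longrightarrow> incl G1 G2 \<or> incl G2 G1"
proof -
  assume G: "G1 \<in> UU" "G2 \<in> UU" "E G1 X" "E G2 X"
  have P: "E G1 P" "E G2 P" using X_subset G by auto
  have "in_rel r G1 G2 \<or> G1 = G2 \<or> in_rel r G2 G1"
    using r_well_orders G(1,2) P unfolding well_orders_def by blast
  then show ?thesis using X_iff G P unfolding incl_def by blast
qed

lemma X_filter: "G \<in> UU \<Longrightarrow> E G X \<Longrightarrow> filter_avoiding w I G"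
  using X_subset P_iff by blast

lemma X_nonempty: "\<exists>G\<in>UU. E G X"
proof -
  obtain G1 where G1: "G1 \<in> UU" "is_upair M G1 w w" using upair_exists w_in_univ by blast
  have "E w Pw" using Pw_iff w_in_univ w_set unfolding subset_of_def by blast
  then have "subset_of M G1 Pw" using G1 unfolding subset_of_def is_upair_def by auto
  then have "E G1 PPw" using PPw_powerset G1(1) by blast
  moreover have "filter_avoiding w I G1"
    using singleton_filter_avoiding[OF w_in_univ w_set ideal_proper[OF ideal] G1(2)] .
  ultimately have "E G1 P" using P_iff G1(1) by blast
  moreover have "subset_of M P P" using set_if_member[OF P_in_univ G1(1)] \<open>E G1 P\<close>
    unfolding subset_of_def by blast
  ultimately obtain G where G: "G \<in> UU" "E G P" "\<forall>b\<in>UU. E b P \<longrightarrow> \<not> in_rel r b G"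
    using r_well_orders P_in_univ G1(1) unfolding well_orders_def by blast
  then have "E G X" using X_iff[rule_format, OF G(1,2)] X_subset by blast
  then show ?thesis using G by blast
qed

lemma w_in_Fu: "E w Fu"
proof -
  obtain G where "G \<in> UU" "E G X" using X_nonempty by blast
  moreover have "subset_of M w w" using w_set unfolding subset_of_def by blast
  ultimately show ?thesis using Fu_iff w_in_univ X_filter[of G] unfolding filter_avoiding_def by blast
qed

lemma Fu_avoids_I: "s \<in> UU \<Longrightarrow> E s Fu \<Longrightarrow> \<not> E s I"
  using Fu_iff X_filter filter_avoiding_avoids by blast

lemma Fu_subset: "s \<in> UU \<Longrightarrow> E s Fu \<Longrightarrow> subset_of M s w"
  using Fu_iff by blast

lemma Fu_inter:
  assumes "s \<in> UU" "t \<in> UU" "u \<in> UU" "E s Fu" "E t Fu" "is_set M u" "\<forall>z\<in>UU. E z u \<longleftrightarrow> E z s \<and> E z t"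
  shows "E u Fu"
proof -
  obtain G1 where G1: "G1 \<in> UU" "E G1 X" "E s G1" using Fu_iff assms(1,4) by blast
  obtain G2 where G2: "G2 \<in> UU" "E G2 X" "E t G2" using Fu_iff assms(2,5) by blast
  obtain G where G: "G \<in> UU" "E G X" "E s G" "E t G"
    using X_chain[OF G1(1) G2(1) G1(2) G2(2)] G1 G2 assms(1,2) unfolding incl_def by blast
  have "E u G" using filter_avoiding_inter[OF X_filter[OF G(1,2)]] G(3,4) assms(1-3,6,7) by blast
  moreover have "subset_of M u w" using assms Fu_subset unfolding subset_of_def by blast
  ultimately show ?thesis using Fu_iff assms(3) G(1,2) by blast
qed

lemma Fu_upward:
  assumes "s \<in> UU" "t \<in> UU" "E s Fu" "subset_of M t w" "incl s t"
  shows "E t Fu"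
proof -
  obtain G where G: "G \<in> UU" "E G X" "E s G" using Fu_iff assms(1,3) by blast
  then have "E t G" using filter_avoiding_upward[OF X_filter[OF G(1,2)]] assms by blast
  then show ?thesis using Fu_iff assms(2,4) G(1,2) by blast
qed

lemma extension_filter:
  assumes s: "s \<in> UU" "subset_of M s w"
    and avoid: "\<not> (\<exists>g\<in>UU. E g Fu \<and> (\<exists>u\<in>UU. E u I \<and> (\<forall>z\<in>UU. E z g \<and> E z s \<longrightarrow> E z u)))"
    and K: "is_set M K" "\<forall>t\<in>UU. E t K \<longleftrightarrow> subset_of M t w \<and> (\<exists>g\<in>UU. E g Fu \<and> (\<forall>z\<in>UU. E z g \<and> E z s \<longrightarrow> E z t))"
  shows "filter_avoiding w I K"
proof -
  have K_mem: "E t K"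
    if "t \<in> UU" "subset_of M t w" "g \<in> UU" "E g Fu" "\<forall>z\<in>UU. E z g \<and> E z s \<longrightarrow> E z t" for t g
    using K(2) that by blast
  have K_subset: "subset_of M t w" if "t \<in> UU" "E t K" for t
    using K(2) that by blast
  have K_witness: "\<exists>g\<in>UU. E g Fu \<and> (\<forall>z\<in>UU. E z g \<and> E z s \<longrightarrow> E z t)"
    if "t \<in> UU" "E t K" for t
    using K(2) that by blast
  show ?thesis unfolding filter_avoiding_def
  proof (intro conjI ballI impI)
    show "is_set M K" by (rule K(1))
    have "subset_of M w w" using w_set unfolding subset_of_def by blast
    then show "E w K" using K_mem[OF w_in_univ _ w_in_univ w_in_Fu] by blast
  next
    fix t assume "t \<in> UU" "E t K"
    then show "subset_of M t w" by (rule K_subset)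
  next
    fix t1 t2 u assume tu: "t1 \<in> UU" "t2 \<in> UU" "u \<in> UU"
      "E t1 K \<and> E t2 K \<and> is_set M u \<and> (\<forall>z\<in>UU. E z u \<longleftrightarrow> E z t1 \<and> E z t2)"
    obtain g1 where g1: "g1 \<in> UU" "E g1 Fu" "\<forall>z\<in>UU. E z g1 \<and> E z s \<longrightarrow> E z t1"
      using K_witness tu(1,4) by blast
    obtain g2 where g2: "g2 \<in> UU" "E g2 Fu" "\<forall>z\<in>UU. E z g2 \<and> E z s \<longrightarrow> E z t2"
      using K_witness tu(2,4) by blast
    obtain g where g: "g \<in> UU" "is_set M g" "\<forall>z\<in>UU. E z g \<longleftrightarrow> E z g1 \<and> E z g2"
      using inter_exists[OF g1(1) g2(1)] by blast
    have "E g Fu" using Fu_inter[OF g1(1) g2(1) g(1) g1(2) g2(2) g(2,3)] .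
    moreover have "\<forall>z\<in>UU. E z g \<and> E z s \<longrightarrow> E z u" using g(3) g1(3) g2(3) tu(4) by blast
    moreover have "subset_of M u w"
      using K_subset[OF tu(1)] tu(4) unfolding subset_of_def by blast
    ultimately show "E u K" using K_mem tu(3) g(1) by blast
  next
    fix t t' assume tt: "t \<in> UU" "t' \<in> UU" "E t K \<and> subset_of M t' w \<and> incl t t'"
    then obtain g where "g \<in> UU" "E g Fu" "\<forall>z\<in>UU. E z g \<and> E z s \<longrightarrow> E z t"
      using K_witness by blast
    then show "E t' K" using K_mem[OF tt(2)] tt(3) unfolding incl_def by blast
  next
    fix t assume "t \<in> UU" "E t K"
    then show "\<not> E t I" using K_witness avoid by blast
  qed
qed

lemma outside_Fu_covered:
  assumes s: "s \<in> UU" "subset_of M s w" "\<not> E s Fu"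
  shows "\<exists>g\<in>UU. E g Fu \<and> (\<exists>u\<in>UU. E u I \<and> (\<forall>z\<in>UU. E z g \<and> E z s \<longrightarrow> E z u))"
proof (rule ccontr)
  assume avoid: "\<not> ?thesis"
  have "\<exists>K\<in>UU. is_set M K \<and>
      (\<forall>t\<in>UU. E t K \<longleftrightarrow> E t Pw \<and> (\<exists>g\<in>UU. E g Fu \<and> (\<forall>z\<in>UU. E z g \<and> E z s \<longrightarrow> E z t)))"
    by (rule separation[where e="(\<lambda>_. Fu)(5 := s)" and i=6
          and \<phi>="Exi 7 (Conj (Mem 7 4) (Forall 8 (Imp (Conj (Mem 8 7) (Mem 8 5)) (Mem 8 6))))"])
       (use Fu_in_univ s Pw_in_univ in auto)
  then obtain K where K: "K \<in> UU" "is_set M K"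
    "\<forall>t\<in>UU. E t K \<longleftrightarrow> subset_of M t w \<and> (\<exists>g\<in>UU. E g Fu \<and> (\<forall>z\<in>UU. E z g \<and> E z s \<longrightarrow> E z t))"
    using Pw_iff by auto
  have "filter_avoiding w I K" using extension_filter[OF s(1,2) avoid K(2,3)] .
  moreover have "subset_of M K Pw" using K(2,3) Pw_iff unfolding subset_of_def by blast
  then have "E K PPw" using PPw_powerset K(1) by blast
  ultimately have K_P: "E K P" using P_iff K(1) by blast
  have "incl L K" if L: "L \<in> UU" "E L X" for L
    unfolding incl_def
  proof (intro ballI impI)
    fix z assume z: "z \<in> UU" "E z L"
    have z_w: "subset_of M z w" using filter_avoiding_subset[OF X_filter[OF L]] z by blast
    then have "E z Fu" using Fu_iff z L by blast
    moreover have "\<forall>y\<in>UU. E y z \<and> E y s \<longrightarrow> E y z" by blast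
    ultimately show "E z K" using K(3) z(1) z_w by blast
  qed
  then have "E K X" using X_iff K(1) K_P by blast
  moreover have "E s K"
  proof -
    have "\<forall>z\<in>UU. E z w \<and> E z s \<longrightarrow> E z s" by blast
    then show ?thesis using K(3) s(1,2) w_in_univ w_in_Fu by blast
  qed
  ultimately have "E s Fu" using Fu_iff s(1,2) K(1) by blast
  then show False using s(3) by blast
qed

lemma Fu_ultra:
  assumes s: "s \<in> UU" "subset_of M s w"
  shows "E s Fu \<or> (\<forall>c\<in>UU. is_set M c \<and> (\<forall>z\<in>UU. E z c \<longleftrightarrow> E z w \<and> \<not> E z s) \<longrightarrow> E c Fu)"
proof (rule ccontr)
  assume "\<not> ?thesis"
  then obtain c where c: "\<not> E s Fu" "c \<in> UU" "is_set M c" "\<forall>z\<in>UU. E z c \<longleftrightarrow> E z w \<and> \<not> E z s" "\<not> E c Fu"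
    by blast
  have "subset_of M c w" using c unfolding subset_of_def by blast
  then obtain g2 u2 where g2: "g2 \<in> UU" "E g2 Fu" "u2 \<in> UU" "E u2 I" "\<forall>z\<in>UU. E z g2 \<and> E z c \<longrightarrow> E z u2"
    using outside_Fu_covered[OF c(2) _ c(5)] by blast
  obtain g1 u1 where g1: "g1 \<in> UU" "E g1 Fu" "u1 \<in> UU" "E u1 I" "\<forall>z\<in>UU. E z g1 \<and> E z s \<longrightarrow> E z u1"
    using outside_Fu_covered[OF s c(1)] by blast
  obtain g where g: "g \<in> UU" "is_set M g" "\<forall>z\<in>UU. E z g \<longleftrightarrow> E z g1 \<and> E z g2"
    using inter_exists[OF g1(1) g2(1)] by blast
  have g_Fu: "E g Fu" using Fu_inter[OF g1(1) g2(1) g(1) g1(2) g2(2) g(2,3)] .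
  have "subset_of M g w" using Fu_subset[OF g(1) g_Fu] .
  moreover have "\<forall>z\<in>UU. E z g \<longrightarrow> E z u1 \<or> E z u2"
    using g g1(5) g2(5) c(4) \<open>subset_of M g w\<close> unfolding subset_of_def by blast
  ultimately have "E g I" using ideal_union[OF ideal] g(1) g1(3,4) g2(3,4) by blast
  then show False using Fu_avoids_I[OF g(1) g_Fu] by blast
qed

lemma Fu_ultrafilter: "is_ultrafilter M Fu w"
  unfolding is_ultrafilter_def Let_def
proof (intro conjI ballI impI)
  show "is_set M Fu" by (rule Fu_set)
  show "E w Fu" by (rule w_in_Fu)
next
  fix s assume s: "s \<in> UU" "E s Fu"
  then show "subset_of M s w" by (rule Fu_subset)
  show "\<exists>t\<in>UU. E t s"
  proof (rule ccontr)
    assume empty: "\<not> (\<exists>t\<in>UU. E t s)"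
    obtain u where "u \<in> UU" "E u I" using ideal_nonempty[OF ideal] by blast
    then have "E s I" using ideal_union[OF ideal] Fu_subset[OF s] s(1) empty by blast
    then show False using Fu_avoids_I[OF s] by blast
  qed
next
  fix s t u assume "s \<in> UU" "t \<in> UU" "u \<in> UU"
    "E s Fu \<and> E t Fu \<and> is_set M u \<and> (\<forall>z\<in>UU. E z u \<longleftrightarrow> E z s \<and> E z t)"
  then show "E u Fu" using Fu_inter by blast
next
  fix s t assume "s \<in> UU" "t \<in> UU" "E s Fu \<and> subset_of M t w \<and> (\<forall>z\<in>UU. E z s \<longrightarrow> E z t)"
  then show "E t Fu" using Fu_upward unfolding incl_def by blast
next
  fix s assume "s \<in> UU" "subset_of M s w"
  then show "E s Fu \<or> (\<forall>c\<in>UU. is_set M c \<and> (\<forall>z\<in>UU. E z c \<longleftrightarrow> E z w \<and> \<not> E z s) \<longrightarrow> E c Fu)"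
    by (rule Fu_ultra)
qed

end

lemma (in zfcu_model) ultrafilter_avoiding_ideal:
  assumes w: "w \<in> UU" "is_set M w" and I: "I \<in> UU" "is_ideal I w"
  shows "\<exists>F\<in>UU. is_ultrafilter M F w \<and> (\<forall>s\<in>UU. E s F \<longrightarrow> \<not> E s I)"
proof -
  obtain Pw where Pw: "Pw \<in> UU" "\<forall>z\<in>UU. E z Pw \<longleftrightarrow> subset_of M z w" using powerset_exists w(1) by blast
  obtain PPw where PPw: "PPw \<in> UU" "\<forall>z\<in>UU. subset_of M z Pw \<longrightarrow> E z PPw" using powerset Pw by blast
  have "\<exists>P\<in>UU. is_set M P \<and> (\<forall>z\<in>UU. E z P \<longleftrightarrow> E z PPw \<and> filter_avoiding w I z)"
    by (rule separation[where e="(\<lambda>_. w)(4 := I)" and i=6 and \<phi>="filter_avoiding_fm"])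
       (use w I PPw sat_filter_avoiding_fm in auto)
  then obtain P where P: "P \<in> UU" "is_set M P" "\<forall>z\<in>UU. E z P \<longleftrightarrow> E z PPw \<and> filter_avoiding w I z"
    by blast
  obtain r where r: "r \<in> UU" "well_orders r P" using well_ordering_exists P(1,2) by blast
  obtain X where X: "X \<in> UU" "\<forall>H\<in>UU. E H X \<longrightarrow> E H P"
    "\<forall>H\<in>UU. E H P \<longrightarrow> (E H X \<longleftrightarrow> (\<forall>K\<in>UU. E K X \<and> in_rel r K H \<longrightarrow> incl K H))"
    using greedy_set_exists[OF P(1) r] by blast
  have "\<exists>Fu\<in>UU. is_set M Fu \<and> (\<forall>z\<in>UU. E z Fu \<longleftrightarrow> E z Pw \<and> (\<exists>G\<in>UU. E G X \<and> E z G))"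
    by (rule separation[where e="(\<lambda>_. w)(4 := X)" and i=6 and \<phi>="Exi 7 (Conj (Mem 7 4) (Mem 6 7))"])
       (use w X Pw in auto)
  then obtain Fu where Fu: "Fu \<in> UU" "is_set M Fu"
    "\<forall>z\<in>UU. E z Fu \<longleftrightarrow> subset_of M z w \<and> (\<exists>G\<in>UU. E G X \<and> E z G)"
    using Pw by blast
  interpret filter_chain M w I Pw PPw P r X Fu
    using w I(2) Pw PPw(2) P(1,3) r(2) X(2,3) Fu by unfold_locales
  show ?thesis using Fu(1) Fu_ultrafilter Fu_avoids_I by blast
qed

section \<open>Failure of Collection refutes Los's theorem\<close>

locale collection_failure = zfcu_model +
  fixes \<phi> :: fm and i j :: nat and e :: "nat \<Rightarrow> 'a" and w :: 'a
  assumes i_neq_j: "i \<noteq> j" and e_in_univ: "\<forall>k. e k \<in> UU" and w_in_univ: "w \<in> UU"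
    and total: "\<forall>a\<in>UU. E a w \<longrightarrow> (\<exists>b\<in>UU. sat M \<phi> (e(i := a, j := b)))"
    and unbounded: "\<not> (\<exists>v\<in>UU. \<forall>a\<in>UU. E a w \<longrightarrow> (\<exists>b\<in>UU. E b v \<and> sat M \<phi> (e(i := a, j := b))))"
begin

definition collectable :: "'a \<Rightarrow> bool" where
  "collectable s \<longleftrightarrow> (\<exists>v\<in>UU. \<forall>a\<in>UU. E a s \<longrightarrow> (\<exists>b\<in>UU. E b v \<and> sat M \<phi> (e(i := a, j := b))))"

lemma w_set: "is_set M w"
  using unbounded set_if_member[OF w_in_univ] w_in_univ by blast

lemma collectable_subsets_exist: "\<exists>I\<in>UU. \<forall>s\<in>UU. E s I \<longleftrightarrow> subset_of M s w \<and> collectable s"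
proof -
  obtain Pw where Pw: "Pw \<in> UU" "\<forall>z\<in>UU. E z Pw \<longleftrightarrow> subset_of M z w" using powerset_exists w_in_univ by blast
  define N where "N = fresh_var \<phi> i j"
  have N: "i < N" "j < N" "var_bound \<phi> \<le> N" unfolding N_def using fresh_var_above by auto
  have \<phi>_local: "sat M \<phi> (e(N := z, Suc N := v, i := a, j := b)) \<longleftrightarrow> sat M \<phi> (e(i := a, j := b))" for z v a b
    by (rule sat_cong_var_bound) (use N in auto)
  have "\<exists>I\<in>UU. is_set M I \<and> (\<forall>z\<in>UU. E z I \<longleftrightarrow> E z Pw \<and> collectable z)"
    by (rule separation[where e=e and i=N and \<phi>="Exi (Suc N) (Forall i (Imp (Mem i N) (Exi j (Conj (Mem j (Suc N)) \<phi>))))"])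
       (use e_in_univ Pw N i_neq_j in \<open>auto simp: \<phi>_local collectable_def\<close>)
  then show ?thesis using Pw by blast
qed

lemma collectable_ideal:
  assumes I: "\<forall>s\<in>UU. E s I \<longleftrightarrow> subset_of M s w \<and> collectable s"
  shows "is_ideal I w"
  unfolding is_ideal_def
proof (intro conjI ballI impI)
  obtain z where "z \<in> UU" "is_set M z" "\<forall>t\<in>UU. \<not> E t z" using empty_set_exists by blast
  then have "subset_of M z w \<and> collectable z" unfolding subset_of_def collectable_def using w_in_univ by blast
  then show "\<exists>s\<in>UU. E s I" using I \<open>z \<in> UU\<close> by blast
next
  show "\<not> E w I" using I unbounded w_in_univ unfolding collectable_def by blast
next
  fix s t u assume stu: "s \<in> UU" "t \<in> UU" "u \<in> UU"
    "E s I \<and> E t I \<and> subset_of M u w \<and> (\<forall>z\<in>UU. E z u \<longrightarrow> E z s \<or> E z t)"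
  then have "collectable s" "collectable t" using I by blast+
  then obtain v1 v2 where v1: "v1 \<in> UU" "\<forall>a\<in>UU. E a s \<longrightarrow> (\<exists>b\<in>UU. E b v1 \<and> sat M \<phi> (e(i := a, j := b)))"
    and v2: "v2 \<in> UU" "\<forall>a\<in>UU. E a t \<longrightarrow> (\<exists>b\<in>UU. E b v2 \<and> sat M \<phi> (e(i := a, j := b)))"
    unfolding collectable_def by blast
  obtain V where V: "V \<in> UU" "\<forall>z\<in>UU. E z v1 \<or> E z v2 \<longrightarrow> E z V" using union2_bounded[OF v1(1) v2(1)] by blast
  have "collectable u" unfolding collectable_def
  proof (rule bexI[OF _ V(1)], intro ballI impI)
    fix a assume a: "a \<in> UU" "E a u"
    then have "E a s \<or> E a t" using stu(4) by blast
    then show "\<exists>b\<in>UU. E b V \<and> sat M \<phi> (e(i := a, j := b))" using v1 v2 V a(1) by blast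
  qed
  then show "E u I" using I stu by blast
qed

lemma not_Los:
  assumes F: "is_ultrafilter M F w" and avoid: "\<forall>s\<in>UU. E s F \<longrightarrow> \<not> collectable s"
  shows "\<not> Los M F w"
proof
  assume Los: "Los M F w"
  let ?cl = "cls M F w"
  obtain g where g_fun: "\<forall>k. g k \<in> UU \<and> is_fun_on M (g k) w"
    and g_at: "\<And>y. y \<in> UU \<Longrightarrow> E y w \<Longrightarrow> (\<lambda>k. app M (g k) y) = e(i := y)"
    using coordinate_functions[OF w_in_univ e_in_univ] by blast
  have "in_filter M F w (\<lambda>y. sat M (Exi j \<phi>) (\<lambda>k. app M (g k) y))"
    unfolding in_filter_def
  proof (rule bexI[OF _ w_in_univ], intro conjI ballI)
    show "E w F" using ultrafilter_carrier_mem[OF F] .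
    show "is_set M w" by (rule w_set)
    show "E y w \<longleftrightarrow> E y w \<and> sat M (Exi j \<phi>) (\<lambda>k. app M (g k) y)" if "y \<in> UU" for y
      using total g_at that by auto
  qed
  then have "sat (ultrapower M F w) (Exi j \<phi>) (\<lambda>k. ?cl (g k))"
    using Los g_fun unfolding Los_def by blast
  then obtain h where h: "h \<in> UU" "is_fun_on M h w"
    and "sat (ultrapower M F w) \<phi> ((\<lambda>k. ?cl (g k))(j := ?cl h))"
    unfolding ultrapower_def by auto
  moreover have "(\<lambda>k. ?cl (g k))(j := ?cl h) = (\<lambda>k. ?cl ((g(j := h)) k))" by (rule ext) simp
  ultimately have "sat (ultrapower M F w) \<phi> (\<lambda>k. ?cl ((g(j := h)) k))" by simp
  moreover have "\<forall>k. (g(j := h)) k \<in> UU \<and> is_fun_on M ((g(j := h)) k) w" using g_fun h by simp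
  ultimately have "in_filter M F w (\<lambda>y. sat M \<phi> (\<lambda>k. app M ((g(j := h)) k) y))"
    using Los unfolding Los_def by blast
  then obtain s where s: "s \<in> UU" "E s F"
    "\<forall>y\<in>UU. E y s \<longleftrightarrow> E y w \<and> sat M \<phi> (\<lambda>k. app M ((g(j := h)) k) y)"
    unfolding in_filter_def by blast
  have gh_at: "(\<lambda>k. app M ((g(j := h)) k) y) = e(i := y, j := app M h y)" if "y \<in> UU" "E y w" for y
    using g_at[OF that] i_neq_j by (auto simp: fun_eq_iff)
  obtain V where V: "V \<in> UU" "\<forall>a\<in>UU. E a w \<longrightarrow> E (app M h a) V" using fun_values_bounded[OF h] by blast
  have "collectable s" unfolding collectable_def
  proof (rule bexI[OF _ V(1)], intro ballI impI)
    fix a assume a: "a \<in> UU" "E a s"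
    then have "E a w" "sat M \<phi> (e(i := a, j := app M h a))" using s(3) gh_at by auto
    then show "\<exists>b\<in>UU. E b V \<and> sat M \<phi> (e(i := a, j := b))"
      using V app_in_univ[OF h(2) a(1)] a(1) by blast
  qed
  then show False using avoid s(1,2) by blast
qed

lemma ultrafilter_without_Los: "\<exists>F\<in>UU. is_ultrafilter M F w \<and> \<not> Los M F w"
proof -
  obtain I where I: "I \<in> UU" "\<forall>s\<in>UU. E s I \<longleftrightarrow> subset_of M s w \<and> collectable s"
    using collectable_subsets_exist by blast
  have "is_ideal I w" using collectable_ideal[OF I(2)] .
  then obtain F where F: "F \<in> UU" "is_ultrafilter M F w" "\<forall>s\<in>UU. E s F \<longrightarrow> \<not> E s I"
    using ultrafilter_avoiding_ideal[OF w_in_univ w_set I(1)] by blast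
  have "\<not> collectable s" if "s \<in> UU" "E s F" for s
  proof
    assume "collectable s"
    moreover have "subset_of M s w" using ultrafilter_member_subset[OF F(2) that] .
    ultimately show False using I(2) F(3) that by blast
  qed
  then show ?thesis using not_Los F(1,2) by blast
qed

end

theorem mainTheorem12:
  fixes U :: "'a struc"
  assumes "ZFCU_R U"
  shows "Collection U \<longleftrightarrow>
         (\<forall>F\<in>univ U. \<forall>x\<in>univ U. is_ultrafilter U F x \<longrightarrow> Los U F x)"
proof
  assume "Collection U"
  show "\<forall>F\<in>univ U. \<forall>x\<in>univ U. is_ultrafilter U F x \<longrightarrow> Los U F x"
  proof (intro ballI impI)
    fix F x assume "F \<in> univ U" "x \<in> univ U" "is_ultrafilter U F x"
    then interpret internal_ultrafilter U F x using assms by unfold_locales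
    show "Los U F x" using Los_if_Collection \<open>Collection U\<close> .
  qed
next
  assume Los: "\<forall>F\<in>univ U. \<forall>x\<in>univ U. is_ultrafilter U F x \<longrightarrow> Los U F x"
  show "Collection U" unfolding Collection_def
  proof (intro allI impI ballI, rule ccontr)
    fix \<phi> i j e w
    assume "i \<noteq> j" "\<forall>k. e k \<in> univ U" "w \<in> univ U"
      "\<forall>x\<in>univ U. memb U x w \<longrightarrow> (\<exists>y\<in>univ U. sat U \<phi> (e(i := x, j := y)))"
      "\<not> (\<exists>v\<in>univ U. \<forall>x\<in>univ U. memb U x w \<longrightarrow> (\<exists>y\<in>univ U. memb U y v \<and> sat U \<phi> (e(i := x, j := y))))"
    then interpret collection_failure U \<phi> i j e w
      using assms by unfold_locales
    show False using ultrafilter_without_Los Los w_in_univ by blast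
  qed
qed

end
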